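(* Let $\varphi,\psi$ be unital linear functionals on $\mathbb{C}\langle X,Y\rangle$ such that $X$ and $Y$ are $c$-free with respect to $(\varphi,\psi)$. Then for every $P\in\mathbb{C}\langle X,Y\rangle$: (a) $\beta^{b,\varphi}_X(P)=\epsilon(P)+(\beta^{\delta,\varphi}_X\otimes\beta^{b,\varphi}_X)(\overleftarrow{\delta}_XP)=\epsilon(P)+(\beta^{b,\varphi}_X\otimes\beta^{\delta,\varphi}_X)(\overrightarrow{\delta}_XP)$; (b) $$\beta^{\delta,\varphi}_X(P)=\epsilon(P)+\sum_{k=1}^\infty\beta^\varphi_k(X,\dots,X)\,\bigl[\epsilon\otimes(\beta^{b,\psi}_Y)^{\otimes(k-1)}\otimes\epsilon\bigr]\bigl(\partial_X^k P\bigr).$$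
   Context: $\mathbb{C}\langle X,Y\rangle$ is the free unital algebra on two letters; $\epsilon(P)$ is the constant coefficient of $P$. $X,Y$ are $c$-free w.r.t. $(\varphi,\psi)$ if the unital subalgebras $\mathbb{C}\langle X\rangle$, $\mathbb{C}\langle Y\rangle$ are free w.r.t. $\psi$ (i.e. $\psi(u_1\cdots u_n)=0$ for alternating centered $u_j$) and $\varphi(u_1\cdots u_n)=\varphi(u_1)\cdots\varphi(u_n)$ for alternating $u_j$ with $\psi(u_j)=0$. For a functional $\theta$, $\beta^\theta_n$ are the Boolean cumulants: $\theta(a_1\cdots a_n)=\sum_{k=1}^n\beta^\theta_k(a_1,\dots,a_k)\theta(a_{k+1}\cdots a_n)$. Every monomial $W\ne1$ has a unique block factorization $W=U_1\cdots U_n$ into nonempty monomials each in $X$ only or $Y$ only, alternating. Block Boolean functional: $\beta^{b,\theta}(1)=1$, $\beta^{b,\theta}(W)=\beta^\theta_n(U_1,\dots,U_n)$; $\beta^{b,\theta}_X(1)=1$, $\beta^{b,\theta}_X(W)=\beta^{b,\theta}(W)$ if the first and last letters of $W\neq 1$ are $X$, and $0$ otherwise ($\beta^{b,\theta}_Y$ analogously). Letter-wise functional: $\beta^{\delta,\theta}_X(1)=1$, $\beta^{\delta,\theta}_X(Z_1\cdots Z_k)=\beta^\theta_k(Z_1,\dots,Z_k)$ ($Z_i\in\{X,Y\}$) if $Z_1=Z_k=X$, else $0$. All are extended linearly. On monomials: $\partial_X^k(W)=\sum W_0\otimes W_1\otimes\cdots\otimes W_k$ over all factorizations $W=W_0XW_1X\cdots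 XW_k$ ($W_i$ monomials, possibly $1$); $\overrightarrow{\delta}_X(W)=\sum_{W=UXV}U\otimes XV$ and $\overleftarrow{\delta}_X(W)=\sum_{W=UXV}UX\otimes V$; extended linearly. Tensor products of functionals act by $(f_0\otimes\cdots\otimes f_k)(W_0\otimes\cdots\otimes W_k)=\prod f_i(W_i)$. *)

theory Defs
  imports Complex_Main
begin

text \<open>The free unital algebra C<X,Y>: monomials are words over the two letters,
  a polynomial is a finitely supported coefficient function on words.
  A linear functional on C<X,Y> is given by its values on monomials and
  extended linearly via app.\<close>

datatype letter = X | Y

type_synonym word = "letter list"
type_synonym cpoly = "word \<Rightarrow> complex"

definition supp :: "cpoly \<Rightarrow> word set" where
  "supp P = {w. P w \<noteq> 0}"

definition is_poly :: "cpoly \<Rightarrow> bool" where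
  "is_poly P \<longleftrightarrow> finite (supp P)"

definition app :: "(word \<Rightarrow> complex) \<Rightarrow> cpoly \<Rightarrow> complex" where
  "app f P = (\<Sum>w\<in>supp P. P w * f w)"

definition mono :: "word \<Rightarrow> cpoly" where
  "mono w = (\<lambda>v. if v = w then 1 else 0)"

definition pmult :: "cpoly \<Rightarrow> cpoly \<Rightarrow> cpoly" where
  "pmult P Q = (\<lambda>w. \<Sum>i\<le>length w. P (take i w) * Q (drop i w))"

fun pprod :: "cpoly list \<Rightarrow> cpoly" where
  "pprod [] = mono []"
| "pprod (u # us) = pmult u (pprod us)"

definition in_alg :: "letter \<Rightarrow> cpoly \<Rightarrow> bool" where
  "in_alg a P \<longleftrightarrow> is_poly P \<and> (\<forall>w. P w \<noteq> 0 \<longrightarrow> set w \<subseteq> {a})"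

definition alternating :: "letter list \<Rightarrow> cpoly list \<Rightarrow> bool" where
  "alternating ls us \<longleftrightarrow> length ls = length us \<and>
     (\<forall>i<length us. in_alg (ls ! i) (us ! i)) \<and>
     (\<forall>i. Suc i < length ls \<longrightarrow> ls ! i \<noteq> ls ! Suc i)"

definition unital :: "(word \<Rightarrow> complex) \<Rightarrow> bool" where
  "unital f \<longleftrightarrow> f [] = 1"

definition free_wrt :: "(word \<Rightarrow> complex) \<Rightarrow> bool" where
  "free_wrt psi \<longleftrightarrow> (\<forall>ls us. us \<noteq> [] \<longrightarrow> alternating ls us \<longrightarrow>
      (\<forall>u\<in>set us. app psi u = 0) \<longrightarrow> app psi (pprod us) = 0)"

definition c_free :: "(word \<Rightarrow> complex) \<Rightarrow> (word \<Rightarrow> complex) \<Rightarrow> bool" where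
  "c_free phi psi \<longleftrightarrow> free_wrt psi \<and>
     (\<forall>ls us. us \<noteq> [] \<longrightarrow> alternating ls us \<longrightarrow>
      (\<forall>u\<in>set us. app psi u = 0) \<longrightarrow>
      app phi (pprod us) = (\<Prod>u\<leftarrow>us. app phi u))"

text \<open>Boolean cumulants: theta(a1...an) = sum_k beta_k(a1..ak) theta(a_{k+1}..a_n),
  where the term k = n contributes beta_n(a1..an) * theta(1) = beta_n(a1..an) (theta unital).\<close>
function bcum :: "(word \<Rightarrow> complex) \<Rightarrow> cpoly list \<Rightarrow> complex" where
  "bcum th as = (if as = [] then 0 else
     app th (pprod as) - (\<Sum>k\<in>{1..<length as}. bcum th (take k as) * app th (pprod (drop k as))))"
  by auto
termination
  by (relation "measure (\<lambda>(th, as). length as)") auto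

text \<open>block factorization into maximal runs of equal letters\<close>
fun blocks :: "word \<Rightarrow> word list" where
  "blocks [] = []"
| "blocks (a # w) = (case blocks w of [] \<Rightarrow> [[a]]
     | b # bs \<Rightarrow> (if hd b = a then (a # b) # bs else [a] # b # bs))"

definition bb :: "(word \<Rightarrow> complex) \<Rightarrow> word \<Rightarrow> complex" where
  "bb th W = (if W = [] then 1 else bcum th (map mono (blocks W)))"

definition bb_let :: "letter \<Rightarrow> (word \<Rightarrow> complex) \<Rightarrow> word \<Rightarrow> complex" where
  "bb_let a th W = (if W = [] then 1 else if hd W = a \<and> last W = a then bb th W else 0)"

definition bdelta :: "letter \<Rightarrow> (word \<Rightarrow> complex) \<Rightarrow> word \<Rightarrow> complex" where
  "bdelta a th W = (if W = [] then 1 else if hd W = a \<and> last W = a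
       then bcum th (map (\<lambda>z. mono [z]) W) else 0)"

definition eps :: "word \<Rightarrow> complex" where
  "eps W = (if W = [] then 1 else 0)"

text \<open>coproducts on monomials, as lists of simple tensors\<close>
definition delta_left :: "letter \<Rightarrow> word \<Rightarrow> (word \<times> word) list" where
  "delta_left a W = [(take (Suc i) W, drop (Suc i) W). i \<leftarrow> [0..<length W], W ! i = a]"

definition delta_right :: "letter \<Rightarrow> word \<Rightarrow> (word \<times> word) list" where
  "delta_right a W = [(take i W, drop i W). i \<leftarrow> [0..<length W], W ! i = a]"

text \<open>partial^k: all factorizations W = W0 a W1 a ... a Wk, as lists [W0,...,Wk]\<close>
fun partial :: "letter \<Rightarrow> nat \<Rightarrow> word \<Rightarrow> word list list" where
  "partial a 0 W = [[W]]"
| "partial a (Suc k) W = concat [map (\<lambda>r. take i W # r) (partial a k (drop (Suc i) W)).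
      i \<leftarrow> [0..<length W], W ! i = a]"

definition tens2 :: "(word \<Rightarrow> complex) \<Rightarrow> (word \<Rightarrow> complex) \<Rightarrow> (word \<times> word) list \<Rightarrow> complex" where
  "tens2 f g ts = (\<Sum>(u, v)\<leftarrow>ts. f u * g v)"

definition tens :: "(word \<Rightarrow> complex) list \<Rightarrow> word list list \<Rightarrow> complex" where
  "tens fs ts = (\<Sum>t\<leftarrow>ts. \<Prod>(f, w)\<leftarrow>zip fs t. f w)"

end

(*
  Under c-freeness, the vectors (U1 - psi U1) ... (U(n-1) - psi U(n-1)) (Un - phi Un), indexed by the
  block factorisations U1 ... Un of the nonempty words, together with 1 form a basis of C<X,Y> on
  which phi vanishes except at 1. So phi W is the vacuum-to-vacuum amplitude of a walk on words
  driven by left multiplication with the letters of W, and the letter-wise Boolean cumulants are the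
  weights of the excursions away from the vacuum. Away from the vacuum, left multiplication never
  changes the last letter of the state, so letter-wise cumulants whose first and last letters differ
  vanish. Part (a) follows, since a block cumulant expands into products of letter-wise cumulants
  over the interval partitions that do not cut at a block boundary.

  For part (b), every state visited by an excursion of a word that starts with X ends with an
  X-block; split it into this block and the prefix before it. The prefix moves as in the model of (psi, psi), whose amplitudes are the block
  cumulants beta^{b,psi}_Y, while the X-block only grows; its growth is governed by the Boolean
  cumulants of X alone.
*)

theory Submission
  imports Defs
begin

section \<open>Polynomials and linear functionals\<close>

lemma supp_mono [simp]: "supp (mono w) = {w}"
  by (auto simp: supp_def mono_def)

lemma is_poly_mono: "is_poly (mono w)"
  by (simp add: is_poly_def)

lemma app_eq_sum_superset:
  assumes "finite A" "supp P \<subseteq> A"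
  shows "app f P = (\<Sum>w\<in>A. P w * f w)"
  unfolding app_def by (rule sum.mono_neutral_left) (use assms in \<open>auto simp: supp_def\<close>)

lemma app_mono [simp]: "app f (mono w) = f w"
  unfolding app_def supp_mono by (simp add: mono_def)

lemma app_cong: "(\<And>w. w \<in> supp P \<Longrightarrow> f w = g w) \<Longrightarrow> app f P = app g P"
  by (simp add: app_def)

lemma app_add_fun: "app (\<lambda>w. f w + g w) P = app f P + app g P"
  by (simp add: app_def sum.distrib algebra_simps)

lemma app_scale_fun: "app (\<lambda>w. c * f w) P = c * app f P"
  by (simp add: app_def sum_distrib_left algebra_simps)

lemma app_sum_fun: "app (\<lambda>w. \<Sum>k\<in>K. g k w) P = (\<Sum>k\<in>K. app (g k) P)"
  unfolding app_def by (simp add: sum_distrib_left sum.swap[of _ K])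

lemma app_eq_suminf:
  assumes "is_poly P"
    and "\<And>w. w \<in> supp P \<Longrightarrow> f w = (\<Sum>k\<le>length w. g k w)"
    and "\<And>k w. length w < k \<Longrightarrow> g k w = 0"
  shows "app f P = (\<Sum>k. app (g k) P)"
proof -
  obtain N where N: "\<And>w. w \<in> supp P \<Longrightarrow> length w \<le> N"
    using assms(1) finite_nat_set_iff_bounded_le[of "length ` supp P"] by (auto simp: is_poly_def)
  have "app f P = app (\<lambda>w. \<Sum>k\<le>N. g k w) P"
  proof (rule app_cong)
    fix w assume w: "w \<in> supp P"
    show "f w = (\<Sum>k\<le>N. g k w)"
      unfolding assms(2)[OF w] by (rule sum.mono_neutral_left) (use N[OF w] assms(3) in auto)
  qed
  also have "\<dots> = (\<Sum>k\<le>N. app (g k) P)"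
    by (rule app_sum_fun)
  also have "\<dots> = (\<Sum>k. app (g k) P)"
  proof (rule suminf_finite[symmetric])
    show "app (g k) P = 0" if "k \<notin> {..N}" for k
      unfolding app_def by (rule sum.neutral) (use N that assms(3) in fastforce)
  qed simp
  finally show ?thesis .
qed

lemma pmult_mono_left:
  "pmult (mono u) Q w = (if take (length u) w = u then Q (drop (length u) w) else 0)"
proof -
  have "pmult (mono u) Q w
      = (\<Sum>i\<le>length w. if i = length u then (if take (length u) w = u then Q (drop (length u) w) else 0) else 0)"
    unfolding pmult_def mono_def by (rule sum.cong) auto
  then show ?thesis
    by (auto simp: sum.delta dest: arg_cong[where f=length])
qed

lemma pmult_mono_Nil_right: "pmult P (mono []) = P"
proof
  fix w
  have "pmult P (mono []) w = (\<Sum>i\<le>length w. if i = length w then P w else 0)"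
    unfolding pmult_def mono_def by (rule sum.cong) auto
  then show "pmult P (mono []) w = P w" by simp
qed

lemma pmult_mono_mono: "pmult (mono u) (mono v) = mono (u @ v)"
proof
  fix w show "pmult (mono u) (mono v) w = mono (u @ v) w"
    unfolding pmult_mono_left by (auto simp: mono_def append_eq_conv_conj) (metis append_take_drop_id)
qed

lemma pprod_map_mono: "pprod (map mono ws) = mono (concat ws)"
  by (induction ws) (auto simp: pmult_mono_mono)

lemma pprod_map_singletons: "pprod (map (\<lambda>z. mono [z]) w) = mono w"
  using pprod_map_mono[of "map (\<lambda>z. [z]) w"] by (simp add: comp_def)

lemma supp_pmult: "supp (pmult P Q) \<subseteq> (\<lambda>(u, v). u @ v) ` (supp P \<times> supp Q)"
proof
  fix w assume "w \<in> supp (pmult P Q)"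
  then have "(\<Sum>i\<le>length w. P (take i w) * Q (drop i w)) \<noteq> 0"
    by (simp add: supp_def pmult_def)
  then obtain i where "P (take i w) * Q (drop i w) \<noteq> 0"
    by (meson sum.neutral)
  then show "w \<in> (\<lambda>(u, v). u @ v) ` (supp P \<times> supp Q)"
    unfolding supp_def by (intro image_eqI[where x="(take i w, drop i w)"]) auto
qed

lemma is_poly_pmult: "is_poly P \<Longrightarrow> is_poly Q \<Longrightarrow> is_poly (pmult P Q)"
  unfolding is_poly_def by (rule finite_subset[OF supp_pmult]) auto

lemma app_diff_scaled:
  assumes "is_poly P" "is_poly Q"
  shows "app f (\<lambda>w. P w - c * Q w) = app f P - c * app f Q"
proof -
  let ?A = "supp P \<union> supp Q"
  have A: "finite ?A" using assms by (simp add: is_poly_def)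
  have "app f (\<lambda>w. P w - c * Q w) = (\<Sum>w\<in>?A. (P w - c * Q w) * f w)"
    by (rule app_eq_sum_superset[OF A]) (auto simp: supp_def)
  also have "\<dots> = (\<Sum>w\<in>?A. P w * f w) - c * (\<Sum>w\<in>?A. Q w * f w)"
    by (simp add: sum_subtractf sum_distrib_left algebra_simps)
  finally show ?thesis
    using app_eq_sum_superset[OF A, of P f] app_eq_sum_superset[OF A, of Q f] by simp
qed

lemma app_pmult_mono:
  assumes "is_poly Q"
  shows "app f (pmult (mono U) Q) = app (\<lambda>w. f (U @ w)) Q"
proof -
  let ?I = "(\<lambda>v. U @ v) ` supp Q"
  have "supp (pmult (mono U) Q) \<subseteq> ?I"
  proof
    fix w assume "w \<in> supp (pmult (mono U) Q)"
    then have "take (length U) w = U" "drop (length U) w \<in> supp Q"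
      by (auto simp: supp_def pmult_mono_left split: if_splits)
    then show "w \<in> ?I" by (metis append_take_drop_id image_eqI)
  qed
  then have "app f (pmult (mono U) Q) = (\<Sum>w\<in>?I. pmult (mono U) Q w * f w)"
    by (rule app_eq_sum_superset[rotated]) (use assms in \<open>simp add: is_poly_def\<close>)
  also have "\<dots> = app (\<lambda>w. f (U @ w)) Q"
    by (subst sum.reindex) (auto simp: inj_on_def app_def pmult_mono_left)
  finally show ?thesis .
qed

definition centred :: "(word \<Rightarrow> complex) \<Rightarrow> word \<Rightarrow> cpoly" where
  "centred ps U = (\<lambda>w. mono U w - ps U * mono [] w)"

lemma pmult_centred: "pmult (centred ps U) Q = (\<lambda>w. pmult (mono U) Q w - ps U * Q w)"
proof
  fix w
  have "pmult (centred ps U) Q w = pmult (mono U) Q w - ps U * pmult (mono []) Q w"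
    unfolding pmult_def centred_def by (simp add: sum_subtractf sum_distrib_left algebra_simps)
  then show "pmult (centred ps U) Q w = pmult (mono U) Q w - ps U * Q w"
    by (simp add: pmult_mono_left)
qed

lemma is_poly_centred: "is_poly (centred ps U)"
proof -
  have "supp (centred ps U) \<subseteq> {U, []}"
    by (auto simp: supp_def centred_def mono_def)
  then show ?thesis
    unfolding is_poly_def by (rule finite_subset) auto
qed

lemma app_pmult_centred:
  assumes "is_poly Q"
  shows "app f (pmult (centred ps U) Q) = app (\<lambda>w. f (U @ w)) Q - ps U * app f Q"
  unfolding pmult_centred app_diff_scaled[OF is_poly_pmult[OF is_poly_mono assms] assms] app_pmult_mono[OF assms] ..

fun centred_eval :: "(word \<Rightarrow> complex) \<Rightarrow> (word \<Rightarrow> complex) \<Rightarrow> word list \<Rightarrow> complex" where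
  "centred_eval ps f [] = f []"
| "centred_eval ps f (U # Us) = centred_eval ps (\<lambda>w. f (U @ w)) Us - ps U * centred_eval ps f Us"

lemma is_poly_pprod_centred: "is_poly (pprod (map (centred ps) Us))"
  by (induction Us) (auto simp: is_poly_mono is_poly_pmult is_poly_centred)

lemma app_pprod_centred: "app f (pprod (map (centred ps) Us)) = centred_eval ps f Us"
  by (induction Us arbitrary: f) (auto simp: app_pmult_centred is_poly_pprod_centred)

lemma app_centred: "app f (centred ps U) = f U - ps U * f []"
  using app_pprod_centred[of f ps "[U]"] by (simp add: pmult_mono_Nil_right)

section \<open>Block factorisations\<close>

definition alt_blocks :: "word list \<Rightarrow> bool" where
  "alt_blocks bs \<longleftrightarrow> (\<forall>U\<in>set bs. U \<noteq> [] \<and> set U \<subseteq> {hd U}) \<and> successively (\<lambda>U V. hd U \<noteq> hd V) bs"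

lemma alt_blocks_Cons:
  "alt_blocks (U # bs) \<longleftrightarrow> U \<noteq> [] \<and> set U \<subseteq> {hd U} \<and> alt_blocks bs \<and> (bs = [] \<or> hd U \<noteq> hd (hd bs))"
  by (auto simp: alt_blocks_def successively_Cons)

lemma alt_blocks_append:
  "alt_blocks (xs @ ys) \<longleftrightarrow> alt_blocks xs \<and> alt_blocks ys \<and> (xs = [] \<or> ys = [] \<or> hd (last xs) \<noteq> hd (hd ys))"
  by (auto simp: alt_blocks_def successively_append_iff)

lemma alt_blocks_take: "alt_blocks bs \<Longrightarrow> alt_blocks (take k bs)"
  using alt_blocks_append[of "take k bs" "drop k bs"] by simp

lemma alt_blocks_butlast: "alt_blocks bs \<Longrightarrow> alt_blocks (butlast bs)"
  by (simp add: butlast_conv_take alt_blocks_take)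

lemma const_word_last: "U \<noteq> [] \<Longrightarrow> set U \<subseteq> {hd U} \<Longrightarrow> last U = hd U"
  using last_in_set by fastforce

lemma concat_alt_blocks_eq_Nil_iff: "alt_blocks bs \<Longrightarrow> concat bs = [] \<longleftrightarrow> bs = []"
  by (cases bs) (auto simp: alt_blocks_Cons)

lemma hd_concat_alt_blocks: "alt_blocks bs \<Longrightarrow> bs \<noteq> [] \<Longrightarrow> hd (concat bs) = hd (hd bs)"
  by (cases bs) (auto simp: alt_blocks_Cons)

lemma last_concat_alt_blocks: "alt_blocks bs \<Longrightarrow> bs \<noteq> [] \<Longrightarrow> last (concat bs) = hd (last bs)"
proof -
  assume bs: "alt_blocks bs" "bs \<noteq> []"
  then have "last bs \<noteq> []" "set (last bs) \<subseteq> {hd (last bs)}"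
    by (auto simp: alt_blocks_def)
  moreover have "concat bs = concat (butlast bs) @ last bs"
    using bs(2) by (metis append_butlast_last_id concat_append concat.simps append_Nil2)
  ultimately show ?thesis using const_word_last by simp
qed

lemma blocks_eq_Nil_iff [simp]: "blocks w = [] \<longleftrightarrow> w = []"
  by (cases w) (auto split: list.split)

lemma concat_blocks [simp]: "concat (blocks w) = w"
  by (induction w) (auto split: list.split)

lemma hd_hd_blocks: "w \<noteq> [] \<Longrightarrow> hd (hd (blocks w)) = hd w"
  by (induction w) (auto split: list.split)

lemma alt_blocks_blocks: "alt_blocks (blocks w)"
proof (induction w)
  case (Cons a w)
  then show ?case
    by (cases "blocks w") (auto simp: alt_blocks_def successively_Cons)
qed (simp add: alt_blocks_def)

lemma blocks_eq_Cons: "blocks V = U # bs \<Longrightarrow> V = U @ concat bs \<and> alt_blocks (U # bs)"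
  using alt_blocks_blocks[of V] concat_blocks[of V] by simp

lemma hd_last_blocks: "w \<noteq> [] \<Longrightarrow> hd (last (blocks w)) = last w"
  using last_concat_alt_blocks[OF alt_blocks_blocks, of w] by simp

lemma blocks_const_append:
  assumes "U \<noteq> []" "set U \<subseteq> {a}" "w = [] \<or> hd w \<noteq> a"
  shows "blocks (U @ w) = U # blocks w"
  using assms
proof (induction U)
  case (Cons b U)
  show ?case
  proof (cases "U = []")
    case True
    then show ?thesis
      using Cons.prems hd_hd_blocks[of w] by (cases "w = []") (auto split: list.split)
  next
    case False
    with Cons.IH Cons.prems have "blocks (U @ w) = U # blocks w" by auto
    moreover have "hd U = b" using Cons.prems False by (cases U) auto
    ultimately show ?thesis by simp
  qed
qed simp

lemma blocks_concat: "alt_blocks bs \<Longrightarrow> blocks (concat bs) = bs"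
proof (induction bs)
  case (Cons U bs)
  then have U: "U \<noteq> []" "set U \<subseteq> {hd U}" and "alt_blocks bs" "bs = [] \<or> hd U \<noteq> hd (hd bs)"
    by (auto simp: alt_blocks_Cons)
  then have "concat bs = [] \<or> hd (concat bs) \<noteq> hd U"
    by (cases "bs = []") (simp_all add: hd_concat_alt_blocks)
  then show ?case
    using blocks_const_append[OF U] Cons.IH \<open>alt_blocks bs\<close> by simp
qed simp

lemma blocks_append_const:
  assumes "T = [] \<or> last T \<noteq> a" "M \<noteq> []" "set M \<subseteq> {a}"
  shows "blocks (T @ M) = blocks T @ [M]"
proof -
  have "hd M = a" using assms(2,3) by (cases M) auto
  then have "alt_blocks (blocks T @ [M])"
    unfolding alt_blocks_append using alt_blocks_blocks[of T] assms hd_last_blocks[of T]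
    by (auto simp: alt_blocks_def)
  then show ?thesis
    using blocks_concat by fastforce
qed

lemma split_last_block:
  fixes V :: word
  assumes "V \<noteq> []" "last V = a"
  obtains T m where "V = T @ replicate m a" "T = [] \<or> last T \<noteq> a" "0 < m"
proof -
  define bs where "bs = blocks V"
  have bs: "alt_blocks bs" "bs \<noteq> []" using assms alt_blocks_blocks by (auto simp: bs_def)
  define M where "M = last bs"
  define T where "T = concat (butlast bs)"
  have split: "bs = butlast bs @ [M]" using bs(2) by (simp add: M_def)
  then have V: "V = T @ M"
    by (metis T_def bs_def concat_blocks concat.simps concat_append append_Nil2)
  have M: "M \<noteq> []" "set M \<subseteq> {hd M}" using bs by (auto simp: alt_blocks_def M_def)
  then have "hd M = a" using const_word_last assms V by (metis last_appendR)
  with M have rep: "M = replicate (length M) a"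
    by (metis replicate_length_same singletonD subsetD)
  have "T = [] \<or> last T \<noteq> a"
  proof (cases "butlast bs = []")
    case False
    have "alt_blocks (butlast bs @ [M])" using bs split by simp
    then have "hd (last (butlast bs)) \<noteq> hd M" using False by (simp add: alt_blocks_append)
    moreover have "last T = hd (last (butlast bs))"
      using last_concat_alt_blocks[OF alt_blocks_butlast[OF bs(1)] False] by (simp add: T_def)
    ultimately show ?thesis using \<open>hd M = a\<close> by simp
  qed (simp add: T_def)
  with that[of T "length M"] V rep M show ?thesis by (metis length_greater_0_conv)
qed

section \<open>Walks of a transition system on words\<close>

text \<open>A transition system assigns to a letter and a state (a word) a list of weighted successor
  states; the empty word is the vacuum. \<open>walk tr W g V\<^sub>0\<close> sums the weights of all paths that
  start at \<open>V\<^sub>0\<close>, read \<open>W\<close> from right to left, and end in a state \<open>V\<close> weighted by \<open>g V\<close>.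
  An excursion leaves the vacuum at its first step and returns to it only at its last step, which
  reads the first letter of \<open>W\<close>.\<close>

type_synonym transitions = "letter \<Rightarrow> word \<Rightarrow> (word \<times> complex) list"

definition transfer :: "transitions \<Rightarrow> letter \<Rightarrow> (word \<Rightarrow> complex) \<Rightarrow> word \<Rightarrow> complex" where
  "transfer tr a g V = (\<Sum>(V', c)\<leftarrow>tr a V. c * g V')"

fun walk :: "transitions \<Rightarrow> word \<Rightarrow> (word \<Rightarrow> complex) \<Rightarrow> word \<Rightarrow> complex" where
  "walk tr [] g = g"
| "walk tr (a # W) g = walk tr W (transfer tr a g)"

definition off_vacuum :: "transitions \<Rightarrow> transitions" where
  "off_vacuum tr a V = filter (\<lambda>(V', c). V' \<noteq> []) (tr a V)"

definition amplitude :: "transitions \<Rightarrow> word \<Rightarrow> complex" where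
  "amplitude tr W = walk tr W eps []"

definition excursion :: "transitions \<Rightarrow> word \<Rightarrow> complex" where
  "excursion tr W = (case W of [] \<Rightarrow> 0 | a # P \<Rightarrow> walk (off_vacuum tr) P (transfer tr a eps) [])"

lemma sum_list_weighted_cong:
  fixes g h :: "word \<Rightarrow> complex"
  shows "(\<And>V c. (V, c) \<in> set L \<Longrightarrow> g V = h V) \<Longrightarrow> (\<Sum>(V, c)\<leftarrow>L. c * g V) = (\<Sum>(V, c)\<leftarrow>L. c * h V)"
  by (induction L) (simp, fastforce)

lemma sum_list_weighted_vanish:
  fixes g :: "word \<Rightarrow> complex"
  shows "(\<And>V c. (V, c) \<in> set L \<Longrightarrow> g V = 0) \<Longrightarrow> (\<Sum>(V, c)\<leftarrow>L. c * g V) = 0"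
  by (induction L) (simp, fastforce)

lemma sum_list_weighted_mult_right:
  fixes g :: "word \<Rightarrow> complex"
  shows "(\<Sum>(V, c)\<leftarrow>L. c * (g V * z)) = (\<Sum>(V, c)\<leftarrow>L. c * g V) * z"
  by (induction L) (auto simp: algebra_simps)

lemma transfer_add_scaled:
  "transfer tr a (\<lambda>V. g V + c * h V) V = transfer tr a g V + c * transfer tr a h V"
proof -
  have "(\<Sum>(V', d)\<leftarrow>L. d * (g V' + c * h V')) = (\<Sum>(V', d)\<leftarrow>L. d * g V') + c * (\<Sum>(V', d)\<leftarrow>L. d * h V')"
    for L :: "(word \<times> complex) list"
    by (induction L) (auto simp: algebra_simps)
  then show ?thesis unfolding transfer_def .
qed

lemma walk_add_scaled:
  "walk tr W (\<lambda>V. g V + c * h V) V\<^sub>0 = walk tr W g V\<^sub>0 + c * walk tr W h V\<^sub>0"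
proof (induction W arbitrary: g h V\<^sub>0)
  case (Cons a W)
  have "transfer tr a (\<lambda>V. g V + c * h V) = (\<lambda>V. transfer tr a g V + c * transfer tr a h V)"
    by (rule ext) (rule transfer_add_scaled)
  then show ?case using Cons.IH by simp
qed simp

lemma walk_zero: "walk tr W (\<lambda>V. 0) V\<^sub>0 = 0"
proof (induction W arbitrary: V\<^sub>0)
  case (Cons a W)
  have "transfer tr a (\<lambda>V. 0) = (\<lambda>V. 0)"
    unfolding transfer_def by (rule ext) (rule sum_list_weighted_vanish, simp)
  with Cons show ?case by simp
qed simp

lemma walk_append_letter: "walk tr (W @ [b]) g = transfer tr b (walk tr W g)"
  by (induction W arbitrary: g) auto

lemma transfer_split_vacuum:
  "transfer tr a g V = transfer (off_vacuum tr) a g V + g [] * transfer tr a eps V"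
proof -
  have "(\<Sum>(V', d)\<leftarrow>L. d * g V')
      = (\<Sum>(V', d)\<leftarrow>filter (\<lambda>(V', c). V' \<noteq> []) L. d * g V') + g [] * (\<Sum>(V', d)\<leftarrow>L. d * eps V')"
    for L :: "(word \<times> complex) list"
    by (induction L) (auto simp: algebra_simps eps_def)
  then show ?thesis unfolding transfer_def off_vacuum_def .
qed

lemma walk_off_vacuum_eps: "walk (off_vacuum tr) W eps [] = eps W"
proof (cases W)
  case (Cons a W')
  have "transfer (off_vacuum tr) a eps = (\<lambda>V. 0)"
    unfolding transfer_def off_vacuum_def by (rule ext, rule sum_list_weighted_vanish) (auto simp: eps_def)
  then show ?thesis using Cons by (simp add: walk_zero eps_def)
qed simp

lemma walk_eps_Nil_eq_amplitude: "(\<lambda>w. walk tr w eps []) = amplitude tr"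
  by (simp add: amplitude_def fun_eq_iff)

lemma amplitude_Nil [simp]: "amplitude tr [] = 1"
  by (simp add: amplitude_def eps_def)

text \<open>Decomposition of a path from the vacuum according to its last visit to the vacuum.\<close>

lemma walk_last_vacuum_visit:
  "walk tr W g [] = (\<Sum>i\<le>length W. walk (off_vacuum tr) (take i W) g [] * amplitude tr (drop i W))"
proof (induction W arbitrary: g)
  case Nil then show ?case by (simp add: amplitude_def eps_def)
next
  case (Cons a W)
  have "transfer tr a g = (\<lambda>V. transfer (off_vacuum tr) a g V + g [] * transfer tr a eps V)"
    by (rule ext) (rule transfer_split_vacuum)
  then have "walk tr (a # W) g [] = walk tr W (transfer (off_vacuum tr) a g) [] + g [] * amplitude tr (a # W)"
    by (simp add: walk_add_scaled amplitude_def)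
  also have "walk tr W (transfer (off_vacuum tr) a g) []
      = (\<Sum>i\<le>length W. walk (off_vacuum tr) (take (Suc i) (a # W)) g [] * amplitude tr (drop (Suc i) (a # W)))"
    by (simp add: Cons.IH)
  finally show ?case
    by (simp only: sum.atMost_Suc_shift length_Cons) (simp add: algebra_simps)
qed

lemma amplitude_excursion_decomp:
  assumes "W \<noteq> []"
  shows "amplitude tr W = (\<Sum>j\<in>{1..length W}. excursion tr (take j W) * amplitude tr (drop j W))"
proof -
  obtain a P where W: "W = a # P" using assms by (cases W) auto
  have "amplitude tr W = (\<Sum>i\<le>length P. excursion tr (take (Suc i) W) * amplitude tr (drop (Suc i) W))"
    using walk_last_vacuum_visit[of tr P "transfer tr a eps"] by (simp add: W amplitude_def excursion_def)
  also have "\<dots> = (\<Sum>j\<in>Suc ` {..length P}. excursion tr (take j W) * amplitude tr (drop j W))"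
    by (simp add: sum.reindex)
  also have "Suc ` {..length P} = {1..length W}"
    by (simp add: W atLeast1_atMost_eq_remove0 image_Suc_atMost)
  finally show ?thesis .
qed

section \<open>Letter-wise Boolean cumulants\<close>

declare bcum.simps [simp del]

definition letter_cumulant :: "(word \<Rightarrow> complex) \<Rightarrow> word \<Rightarrow> complex" where
  "letter_cumulant th W = bcum th (map (\<lambda>z. mono [z]) W)"

lemma bdelta_eq_letter_cumulant:
  "bdelta a th W = (if W = [] then 1 else if hd W = a \<and> last W = a then letter_cumulant th W else 0)"
  by (simp add: bdelta_def letter_cumulant_def)

lemma letter_cumulant_rec:
  assumes "W \<noteq> []"
  shows "letter_cumulant th W = th W - (\<Sum>k\<in>{1..<length W}. letter_cumulant th (take k W) * th (drop k W))"
  unfolding letter_cumulant_def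
  by (subst bcum.simps) (use assms in \<open>simp add: take_map drop_map pprod_map_singletons\<close>)

lemma letter_cumulant_singleton: "letter_cumulant th [a] = th [a]"
  using letter_cumulant_rec[of "[a]" th] by simp

lemma sum_atLeastAtMost_length:
  assumes "W \<noteq> []"
  shows "(\<Sum>j\<in>{1..length W}. f j) = f (length W) + (\<Sum>j\<in>{1..<length W}. f j)"
proof -
  have "{1..length W} = insert (length W) {1..<length W}"
    using assms by (cases W) auto
  then show ?thesis by simp
qed

lemma moment_letter_cumulant_expansion:
  assumes "th [] = 1" "W \<noteq> []"
  shows "th W = (\<Sum>j\<in>{1..length W}. letter_cumulant th (take j W) * th (drop j W))"
  unfolding sum_atLeastAtMost_length[OF assms(2)]
  using letter_cumulant_rec[OF assms(2), of th] assms(1) by simp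

lemma letter_cumulant_eq_excursion:
  assumes "\<And>W. amplitude tr W = th W" and "W \<noteq> []"
  shows "letter_cumulant th W = excursion tr W"
  using assms(2)
proof (induction "length W" arbitrary: W rule: less_induct)
  case less
  have "(\<Sum>k\<in>{1..<length W}. letter_cumulant th (take k W) * th (drop k W))
      = (\<Sum>k\<in>{1..<length W}. excursion tr (take k W) * th (drop k W))"
  proof (rule sum.cong[OF refl])
    fix k assume "k \<in> {1..<length W}"
    then show "letter_cumulant th (take k W) * th (drop k W) = excursion tr (take k W) * th (drop k W)"
      using less.hyps[of "take k W"] less.prems by simp
  qed
  then have "letter_cumulant th W = th W - (\<Sum>k\<in>{1..<length W}. excursion tr (take k W) * th (drop k W))"
    using letter_cumulant_rec[OF less.prems] by simp
  also have "th W = (\<Sum>j\<in>{1..length W}. excursion tr (take j W) * th (drop j W))"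
    using amplitude_excursion_decomp[OF less.prems, of tr] by (simp add: assms(1))
  finally show ?case
    unfolding sum_atLeastAtMost_length[OF less.prems] using assms(1)[of "[]"] by simp
qed

section \<open>A basis adapted to c-freeness\<close>

text \<open>\<open>basis_eval ph ps f (blocks V)\<close> is the value of \<open>f\<close> on the vector
  \<open>e\<^sub>V = (U\<^sub>1 - \<psi> U\<^sub>1) \<cdots> (U\<^sub>n\<^sub>-\<^sub>1 - \<psi> U\<^sub>n\<^sub>-\<^sub>1) (U\<^sub>n - \<phi> U\<^sub>n)\<close>, where \<open>U\<^sub>1 \<cdots> U\<^sub>n\<close> is the
  block factorisation of \<open>V\<close> and \<open>e\<^bsub>[]\<^esub> = 1\<close>. These vectors form a basis of \<open>\<complex>\<langle>X,Y\<rangle>\<close>,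
  \<open>left_mult ph ps a V\<close> lists the coordinates of \<open>a e\<^sub>V\<close> in it, and \<open>adapted ph ps\<close> says that
  \<open>\<phi>\<close> vanishes on every \<open>e\<^sub>V\<close> with \<open>V \<noteq> []\<close>.\<close>

definition basis_eval ::
  "(word \<Rightarrow> complex) \<Rightarrow> (word \<Rightarrow> complex) \<Rightarrow> (word \<Rightarrow> complex) \<Rightarrow> word list \<Rightarrow> complex" where
  "basis_eval ph ps f bs = (if bs = [] then f []
     else centred_eval ps f bs + (ps (last bs) - ph (last bs)) * centred_eval ps f (butlast bs))"

definition left_mult :: "(word \<Rightarrow> complex) \<Rightarrow> (word \<Rightarrow> complex) \<Rightarrow> transitions" where
  "left_mult ph ps a V = (case blocks V of
     [] \<Rightarrow> [([a], 1), ([], ph [a])]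
   | U # bs \<Rightarrow> if hd U = a then
       (if bs = [] then [(a # U, 1), ([a], - ph U), ([], ph (a # U) - ph U * ph [a])]
        else [(a # V, 1), (a # concat bs, - ps U), (concat bs, ps (a # U) - ps U * ps [a])])
     else [(a # V, 1), (V, ps [a])])"

lemma basis_eval_Nil [simp]: "basis_eval ph ps f [] = f []"
  by (simp add: basis_eval_def)

lemma basis_eval_singleton: "basis_eval ph ps f [U] = f U - ph U * f []"
  by (simp add: basis_eval_def algebra_simps)

lemma basis_eval_Cons:
  "bs \<noteq> [] \<Longrightarrow> basis_eval ph ps f (U # bs) = basis_eval ph ps (\<lambda>w. f (U @ w)) bs - ps U * basis_eval ph ps f bs"
  by (cases "butlast bs") (auto simp: basis_eval_def algebra_simps)

lemma transfer_left_mult_basis_eval: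
  "transfer (left_mult ph ps) a (\<lambda>V. basis_eval ph ps f (blocks V)) V
     = basis_eval ph ps (\<lambda>w. f (a # w)) (blocks V)"
proof (cases "blocks V")
  case Nil
  then show ?thesis by (simp add: transfer_def left_mult_def basis_eval_singleton)
next
  case (Cons U bs)
  then have V: "V = U @ concat bs" and U: "alt_blocks (U # bs)"
    using blocks_eq_Cons by blast+
  show ?thesis
  proof (cases "hd U = a")
    case hd: True
    show ?thesis
    proof (cases "bs = []")
      case True
      then have "blocks (a # U) = [a # U]" using Cons hd V by simp
      then show ?thesis using Cons True hd V
        by (simp add: transfer_def left_mult_def basis_eval_singleton algebra_simps)
    next
      case False
      have "hd (concat bs) \<noteq> a" and bs: "blocks (concat bs) = bs"
        using hd_concat_alt_blocks U False hd blocks_concat by (auto simp: alt_blocks_Cons)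
      then have "blocks ([a] @ concat bs) = [a] # bs"
        using blocks_const_append[of "[a]" a "concat bs"] by simp
      then show ?thesis using Cons False hd bs
        by (simp add: transfer_def left_mult_def basis_eval_Cons algebra_simps)
    qed
  next
    case False
    then show ?thesis using Cons
      by (simp add: transfer_def left_mult_def basis_eval_Cons algebra_simps)
  qed
qed

lemma walk_left_mult_basis_eval:
  "walk (left_mult ph ps) W (\<lambda>V. basis_eval ph ps f (blocks V))
     = (\<lambda>V. basis_eval ph ps (\<lambda>w. f (W @ w)) (blocks V))"
proof (induction W arbitrary: f)
  case (Cons a W)
  have "transfer (left_mult ph ps) a (\<lambda>V. basis_eval ph ps f (blocks V))
      = (\<lambda>V. basis_eval ph ps (\<lambda>w. f (a # w)) (blocks V))"
    by (rule ext) (rule transfer_left_mult_basis_eval)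
  then show ?case using Cons.IH[of "\<lambda>w. f (a # w)"] by simp
qed simp

definition adapted :: "(word \<Rightarrow> complex) \<Rightarrow> (word \<Rightarrow> complex) \<Rightarrow> bool" where
  "adapted ph ps \<longleftrightarrow> (\<forall>V. basis_eval ph ps ph (blocks V) = eps V)"

lemma adapted_unital: "adapted ph ps \<Longrightarrow> ph [] = 1"
  unfolding adapted_def by (drule spec[of _ "[]"]) (simp add: eps_def)

lemma amplitude_left_mult:
  assumes "adapted ph ps"
  shows "amplitude (left_mult ph ps) W = ph W"
proof -
  have "eps = (\<lambda>V. basis_eval ph ps ph (blocks V))"
    using assms by (auto simp: adapted_def)
  then have "amplitude (left_mult ph ps) W = walk (left_mult ph ps) W (\<lambda>V. basis_eval ph ps ph (blocks V)) []"
    by (simp add: amplitude_def)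
  then show ?thesis
    by (simp add: walk_left_mult_basis_eval)
qed

lemma letter_cumulant_eq_excursion_left_mult:
  "adapted ph ps \<Longrightarrow> W \<noteq> [] \<Longrightarrow> letter_cumulant ph W = excursion (left_mult ph ps) W"
  by (rule letter_cumulant_eq_excursion) (rule amplitude_left_mult)

lemma alternating_centred:
  assumes "alt_blocks bs"
  shows "alternating (map hd bs) (map (centred ps) bs)"
  unfolding alternating_def
proof (intro conjI allI impI)
  fix i assume i: "i < length (map (centred ps) bs)"
  then have "set (bs ! i) \<subseteq> {hd (bs ! i)}"
    using assms nth_mem by (fastforce simp: alt_blocks_def)
  then have "\<forall>w. centred ps (bs ! i) w \<noteq> 0 \<longrightarrow> set w \<subseteq> {hd (bs ! i)}"
    by (auto simp: centred_def mono_def)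
  then show "in_alg (map hd bs ! i) (map (centred ps) bs ! i)"
    using i by (simp add: in_alg_def is_poly_centred)
next
  fix i assume "Suc i < length (map hd bs)"
  then show "map hd bs ! i \<noteq> map hd bs ! Suc i"
    using successively_nth[of _ bs i] assms by (auto simp: alt_blocks_def)
qed simp

lemma centred_eval_c_free:
  assumes "c_free phi psi" "unital phi" "unital psi" "alt_blocks bs" "bs \<noteq> []"
  shows "centred_eval psi phi bs = (\<Prod>U\<leftarrow>bs. phi U - psi U)"
proof -
  have "\<forall>u\<in>set (map (centred psi) bs). app psi u = 0"
    using assms(3) by (auto simp: app_centred unital_def)
  then have "app phi (pprod (map (centred psi) bs)) = (\<Prod>u\<leftarrow>map (centred psi) bs. app phi u)"
    using assms(1,5) alternating_centred[OF assms(4)] unfolding c_free_def by blast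
  then show ?thesis
    using assms(2) by (simp add: app_pprod_centred app_centred unital_def comp_def)
qed

lemma centred_eval_free:
  assumes "free_wrt psi" "unital psi" "alt_blocks bs" "bs \<noteq> []"
  shows "centred_eval psi psi bs = 0"
proof -
  have "\<forall>u\<in>set (map (centred psi) bs). app psi u = 0"
    using assms(2) by (auto simp: app_centred unital_def)
  then have "app psi (pprod (map (centred psi) bs)) = 0"
    using assms(1,4) alternating_centred[OF assms(3)] unfolding free_wrt_def by blast
  then show ?thesis by (simp add: app_pprod_centred)
qed

lemma adapted_if_c_free:
  assumes "c_free phi psi" "unital phi" "unital psi"
  shows "adapted phi psi"
  unfolding adapted_def
proof
  fix V :: word
  show "basis_eval phi psi phi (blocks V) = eps V"
  proof (cases "V = []")
    case True then show ?thesis using assms(2) by (simp add: unital_def eps_def)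
  next
    case False
    define bs where "bs = blocks V"
    have bs: "alt_blocks bs" "bs \<noteq> []" "bs = butlast bs @ [last bs]"
      using False alt_blocks_blocks by (auto simp: bs_def)
    have "centred_eval psi phi (butlast bs) = (\<Prod>U\<leftarrow>butlast bs. phi U - psi U)"
      using centred_eval_c_free[OF assms alt_blocks_butlast[OF bs(1)]] assms(2)
      by (cases "butlast bs = []") (simp_all add: unital_def)
    moreover have "centred_eval psi phi bs = (\<Prod>U\<leftarrow>butlast bs. phi U - psi U) * (phi (last bs) - psi (last bs))"
    proof -
      have "(\<Prod>U\<leftarrow>butlast bs @ [last bs]. phi U - psi U)
          = (\<Prod>U\<leftarrow>butlast bs. phi U - psi U) * (phi (last bs) - psi (last bs))"
        by simp
      then show ?thesis using centred_eval_c_free[OF assms bs(1,2)] bs(3) by simp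
    qed
    ultimately show ?thesis
      using False bs(2) unfolding bs_def[symmetric] by (simp add: basis_eval_def eps_def algebra_simps)
  qed
qed

lemma adapted_if_free:
  assumes "free_wrt psi" "unital psi"
  shows "adapted psi psi"
  unfolding adapted_def
proof
  fix V :: word
  show "basis_eval psi psi psi (blocks V) = eps V"
    using assms(2) centred_eval_free[OF assms alt_blocks_blocks]
    by (cases "V = []") (simp_all add: basis_eval_def unital_def eps_def)
qed

lemma left_mult_last:
  assumes "V \<noteq> []" "(V', c) \<in> set (left_mult ph ps a V)" "V' \<noteq> []"
  shows "last V' = last V"
proof -
  obtain U bs where bV: "blocks V = U # bs" using assms(1) by (cases "blocks V") auto
  then have V: "V = U @ concat bs" and U: "alt_blocks (U # bs)"
    using blocks_eq_Cons by blast+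
  have lU: "last U = hd U"
    using U by (intro const_word_last) (simp_all add: alt_blocks_Cons)
  show ?thesis
  proof (cases "bs = []")
    case True
    with assms(2) have "V' = a # U \<or> (V' = [a] \<and> hd U = a) \<or> V' = [] \<or> V' = a # V \<or> V' = V"
      by (auto simp: left_mult_def bV split: if_splits)
    then show ?thesis using assms(3) True V U lU by (auto simp: alt_blocks_Cons)
  next
    case False
    then have "concat bs \<noteq> []"
      using U concat_alt_blocks_eq_Nil_iff by (simp add: alt_blocks_Cons)
    then have "last V = last (concat bs)" using V by simp
    moreover from assms(2) False have "V' = a # V \<or> V' = a # concat bs \<or> V' = concat bs \<or> V' = V"
      by (auto simp: left_mult_def bV split: if_splits)
    ultimately show ?thesis using \<open>concat bs \<noteq> []\<close> assms(1) by auto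
  qed
qed

lemma left_mult_to_vacuum:
  assumes "V \<noteq> []" "([], c) \<in> set (left_mult ph ps a V)"
  shows "last V = a"
proof -
  obtain U bs where bV: "blocks V = U # bs" using assms(1) by (cases "blocks V") auto
  then have V: "V = U @ concat bs" and U: "alt_blocks (U # bs)"
    using blocks_eq_Cons by blast+
  have lU: "last U = hd U"
    using U by (intro const_word_last) (simp_all add: alt_blocks_Cons)
  show ?thesis
  proof (cases "bs = []")
    case True then show ?thesis using assms bV V lU by (auto simp: left_mult_def split: if_splits)
  next
    case False
    then have "concat bs \<noteq> []"
      using U concat_alt_blocks_eq_Nil_iff by (simp add: alt_blocks_Cons)
    then show ?thesis using assms bV False by (auto simp: left_mult_def split: if_splits)
  qed
qed

lemma walk_off_vacuum_left_mult_vanish: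
  assumes "V\<^sub>0 \<noteq> []" "\<And>V. V \<noteq> [] \<Longrightarrow> last V = last V\<^sub>0 \<Longrightarrow> g V = 0"
  shows "walk (off_vacuum (left_mult ph ps)) W g V\<^sub>0 = 0"
  using assms(2)
proof (induction W arbitrary: g)
  case Nil
  then show ?case using assms(1) by simp
next
  case (Cons a W)
  have "transfer (off_vacuum (left_mult ph ps)) a g V = 0" if "V \<noteq> []" "last V = last V\<^sub>0" for V
    unfolding transfer_def off_vacuum_def
  proof (rule sum_list_weighted_vanish)
    fix V' c assume "(V', c) \<in> set (filter (\<lambda>(V', c). V' \<noteq> []) (left_mult ph ps a V))"
    then show "g V' = 0"
      using left_mult_last[OF that(1), of V' c] that(2) Cons.prems by auto
  qed
  then show ?case using Cons.IH by simp
qed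

lemma excursion_left_mult_mixed:
  assumes "W \<noteq> []" "hd W \<noteq> last W"
  shows "excursion (left_mult ph ps) W = 0"
proof -
  obtain a P' where W': "W = a # P'" using assms(1) by (cases W) auto
  with assms(2) obtain P b where W: "W = a # P @ [b]" and "b \<noteq> a"
    by (cases P' rule: rev_cases) auto
  let ?h = "transfer (left_mult ph ps) a eps"
  have h: "?h V = 0" if "V \<noteq> []" "last V = b" for V
    unfolding transfer_def
  proof (rule sum_list_weighted_vanish)
    fix V' c assume V': "(V', c) \<in> set (left_mult ph ps a V)"
    have "V' \<noteq> []"
    proof
      assume "V' = []"
      then have "last V = a" using left_mult_to_vacuum[OF that(1)] V' by simp
      then show False using that(2) \<open>b \<noteq> a\<close> by simp
    qed
    then show "eps V' = 0" by (simp add: eps_def)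
  qed
  have "excursion (left_mult ph ps) W = transfer (off_vacuum (left_mult ph ps)) b (walk (off_vacuum (left_mult ph ps)) P ?h) []"
    by (simp add: excursion_def W walk_append_letter)
  also have "\<dots> = walk (off_vacuum (left_mult ph ps)) P ?h [b]"
    by (simp add: transfer_def off_vacuum_def left_mult_def)
  also have "\<dots> = 0"
    by (rule walk_off_vacuum_left_mult_vanish) (use h in auto)
  finally show ?thesis .
qed

lemma letter_cumulant_mixed:
  assumes "adapted ph ps" "W \<noteq> []" "hd W \<noteq> last W"
  shows "letter_cumulant ph W = 0"
  using letter_cumulant_eq_excursion_left_mult[OF assms(1,2)] excursion_left_mult_mixed[OF assms(2,3)]
  by simp

section \<open>Block-wise versus letter-wise Boolean cumulants\<close>

definition block_bounds :: "word \<Rightarrow> nat set" where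
  "block_bounds W = {i. 0 < i \<and> i < length W \<and> W ! (i - 1) \<noteq> W ! i}"

lemma finite_block_bounds [simp]: "finite (block_bounds W)"
  by (auto simp: block_bounds_def)

lemma block_bounds_Cons_block:
  assumes "alt_blocks (U # bs)"
  shows "block_bounds (U @ concat bs)
    = (if bs = [] then {} else {length U}) \<union> (\<lambda>i. i + length U) ` block_bounds (concat bs)"
proof -
  from assms have U: "U \<noteq> []" "\<And>k. k < length U \<Longrightarrow> U ! k = hd U"
    and bs: "alt_blocks bs" "bs = [] \<or> hd U \<noteq> hd (hd bs)"
    by (auto simp: alt_blocks_Cons dest!: nth_mem)
  let ?W = "concat bs"
  have W: "?W \<noteq> [] \<longleftrightarrow> bs \<noteq> []" using concat_alt_blocks_eq_Nil_iff[OF bs(1)] by auto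
  show ?thesis
  proof (rule set_eqI)
    fix i
    consider "i < length U" | "i = length U" | j where "i = j + length U" "0 < j"
      by (metis add.commute less_imp_add_positive linorder_neqE_nat)
    then show "i \<in> block_bounds (U @ ?W)
        \<longleftrightarrow> i \<in> (if bs = [] then {} else {length U}) \<union> (\<lambda>i. i + length U) ` block_bounds ?W"
    proof cases
      case 1
      then show ?thesis using U(2)[of "i - 1"] U(2)[of i] by (auto simp: block_bounds_def nth_append)
    next
      case 2
      moreover have "bs \<noteq> [] \<Longrightarrow> (U @ ?W) ! i = hd (hd bs)"
        using 2 W hd_concat_alt_blocks[OF bs(1)] by (simp add: nth_append hd_conv_nth)
      ultimately show ?thesis
        using U bs(2) W by (auto simp: block_bounds_def nth_append)
    next
      case 3
      moreover have "i - 1 = (j - 1) + length U" using 3 by simp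
      ultimately show ?thesis
        by (auto simp: block_bounds_def nth_append)
    qed
  qed
qed

lemma sum_block_splits:
  "alt_blocks bs \<Longrightarrow> (\<Sum>k\<in>{1..<length bs}. F (concat (take k bs)) (concat (drop k bs)))
     = (\<Sum>i\<in>block_bounds (concat bs). F (take i (concat bs)) (drop i (concat bs)))"
proof (induction bs arbitrary: F)
  case Nil then show ?case by (simp add: block_bounds_def)
next
  case (Cons U bs)
  let ?W = "concat bs" and ?first = "if bs = [] then 0 else F U (concat bs)"
  have "(\<Sum>k\<in>{1..<length (U # bs)}. F (concat (take k (U # bs))) (concat (drop k (U # bs))))
     = ?first + (\<Sum>k\<in>{1..<length bs}. F (U @ concat (take k bs)) (concat (drop k bs)))"
  proof (cases "bs = []")
    case False
    then have split: "{1..<length (U # bs)} = insert 1 {Suc 1..<Suc (length bs)}" by (cases bs) auto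
    have "(\<Sum>k\<in>{1..<length (U # bs)}. F (concat (take k (U # bs))) (concat (drop k (U # bs))))
        = F U ?W + (\<Sum>k\<in>{Suc 1..<Suc (length bs)}. F (concat (take k (U # bs))) (concat (drop k (U # bs))))"
      unfolding split by (subst sum.insert) auto
    also have "(\<Sum>k\<in>{Suc 1..<Suc (length bs)}. F (concat (take k (U # bs))) (concat (drop k (U # bs))))
        = (\<Sum>k\<in>{1..<length bs}. F (U @ concat (take k bs)) (concat (drop k bs)))"
      by (simp only: sum.shift_bounds_Suc_ivl) simp
    finally show ?thesis using False by simp
  qed simp
  moreover have "(\<Sum>i\<in>block_bounds (U @ ?W). F (take i (U @ ?W)) (drop i (U @ ?W)))
     = ?first + (\<Sum>i\<in>block_bounds ?W. F (U @ take i ?W) (drop i ?W))"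
    unfolding block_bounds_Cons_block[OF Cons.prems]
    by (subst sum.union_disjoint) (auto simp: block_bounds_def sum.reindex inj_on_def)
  ultimately show ?case
    using Cons.IH[of "\<lambda>u v. F (U @ u) v"] Cons.prems by (simp add: alt_blocks_Cons)
qed

lemma bb_recursion:
  assumes "W \<noteq> []"
  shows "bb th W = th W - (\<Sum>i\<in>block_bounds W. bb th (take i W) * th (drop i W))"
proof -
  define bs where "bs = blocks W"
  have bs: "alt_blocks bs" "bs \<noteq> []" "W = concat bs"
    using assms alt_blocks_blocks by (simp_all add: bs_def)
  have k: "bcum th (take k (map mono bs)) = bb th (concat (take k bs))" if "k \<in> {1..<length bs}" for k
  proof -
    have ne: "concat (take k bs) \<noteq> []"
      using that bs(2) concat_alt_blocks_eq_Nil_iff[OF alt_blocks_take[OF bs(1)]] by auto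
    have "bb th (concat (take k bs)) = bcum th (map mono (take k bs))"
      unfolding bb_def if_not_P[OF ne] blocks_concat[OF alt_blocks_take[OF bs(1)]] ..
    then show ?thesis
      by (simp add: take_map)
  qed
  have "bb th W = bcum th (map mono bs)"
    using assms by (simp add: bb_def bs_def)
  also have "\<dots> = th W - (\<Sum>k\<in>{1..<length bs}. bcum th (take k (map mono bs)) * app th (pprod (drop k (map mono bs))))"
    by (subst bcum.simps) (simp add: bs pprod_map_mono)
  also have "(\<Sum>k\<in>{1..<length bs}. bcum th (take k (map mono bs)) * app th (pprod (drop k (map mono bs))))
      = (\<Sum>k\<in>{1..<length bs}. bb th (concat (take k bs)) * th (concat (drop k bs)))"
    by (rule sum.cong) (simp_all add: k drop_map pprod_map_mono)
  also have "\<dots> = (\<Sum>i\<in>block_bounds W. bb th (take i W) * th (drop i W))"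
    using sum_block_splits[OF bs(1), of "\<lambda>u v. bb th u * th v"] bs(3) by simp
  finally show ?thesis .
qed

lemma block_bounds_drop:
  assumes "j < length W"
  shows "{i \<in> block_bounds W. j < i} = (\<lambda>i. i + j) ` block_bounds (drop j W)"
proof (rule set_eqI)
  fix i
  show "i \<in> {i \<in> block_bounds W. j < i} \<longleftrightarrow> i \<in> (\<lambda>i. i + j) ` block_bounds (drop j W)"
  proof (cases "j < i")
    case True
    then obtain k where i: "i = k + j" "0 < k" by (metis add.commute less_imp_add_positive)
    then have "i - 1 = (k - 1) + j" by simp
    then show ?thesis using i assms by (auto simp: block_bounds_def add.commute)
  qed (auto simp: block_bounds_def)
qed

lemma block_bounds_take: "i \<le> length W \<Longrightarrow> block_bounds (take i W) = {j \<in> block_bounds W. j < i}"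
  by (auto simp: block_bounds_def)

text \<open>The inner sum of the expansion of \<open>bb th W\<close> below, for a fixed first letter-wise factor
  \<open>take j W\<close>.\<close>

lemma moment_drop_block_bounds:
  assumes "th [] = 1" "j \<in> {1..length W}"
  shows "th (drop j W) - (\<Sum>i\<in>{i \<in> block_bounds W. j \<le> i \<and> (j = i \<or> j \<notin> block_bounds W)}.
             bb th (drop j (take i W)) * th (drop i W))
       = (if j \<in> block_bounds W then 0 else bb th (drop j W))"
proof -
  consider "j = length W" | "j \<in> block_bounds W" | "j < length W" "j \<notin> block_bounds W"
    using assms(2) by fastforce
  then show ?thesis
  proof cases
    case 1
    then have "{i \<in> block_bounds W. j \<le> i \<and> (j = i \<or> j \<notin> block_bounds W)} = {}"
      by (auto simp: block_bounds_def)
    then show ?thesis using 1 assms(1) by (simp add: block_bounds_def bb_def)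
  next
    case 2
    then have "{i \<in> block_bounds W. j \<le> i \<and> (j = i \<or> j \<notin> block_bounds W)} = {j}" by auto
    then show ?thesis using 2 by (simp add: bb_def)
  next
    case 3
    define V where "V = drop j W"
    have V: "V \<noteq> []" using 3 by (simp add: V_def)
    have "{i \<in> block_bounds W. j \<le> i \<and> (j = i \<or> j \<notin> block_bounds W)} = (\<lambda>i. i + j) ` block_bounds V"
      using 3 block_bounds_drop[OF 3(1)] by (auto simp: V_def le_less)
    then have "(\<Sum>i\<in>{i \<in> block_bounds W. j \<le> i \<and> (j = i \<or> j \<notin> block_bounds W)}.
             bb th (drop j (take i W)) * th (drop i W))
        = (\<Sum>i\<in>block_bounds V. bb th (take i V) * th (drop i V))"
      by (simp add: sum.reindex inj_on_def V_def drop_take add.commute)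
    also have "\<dots> = th V - bb th V" using bb_recursion[OF V, of th] by simp
    finally show ?thesis using 3 by (simp add: V_def)
  qed
qed

lemma bb_letter_cumulant_expansion:
  assumes "th [] = 1" "W \<noteq> []"
  shows "bb th W = (\<Sum>j\<in>{1..length W} - block_bounds W. letter_cumulant th (take j W) * bb th (drop j W))"
  using assms(2)
proof (induction "length W" arbitrary: W rule: less_induct)
  case less
  define n where "n = length W"
  let ?R = "\<lambda>i j. j \<le> i \<and> (j = i \<or> j \<notin> block_bounds W)"
  let ?F = "\<lambda>i j. letter_cumulant th (take j W) * bb th (drop j (take i W)) * th (drop i W)"
  have bounds: "block_bounds W \<subseteq> {1..<n}" by (auto simp: block_bounds_def n_def)
  have IH: "bb th (take i W) * th (drop i W) = (\<Sum>j\<in>{j \<in> {1..n}. ?R i j}. ?F i j)"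
    if i: "i \<in> block_bounds W" for i
  proof -
    have i_lt: "0 < i" "i < n" using i bounds by auto
    then have "bb th (take i W)
        = (\<Sum>j\<in>{1..i} - block_bounds (take i W). letter_cumulant th (take j (take i W)) * bb th (drop j (take i W)))"
      using less.hyps[of "take i W"] less.prems by (simp add: n_def min_def)
    also have "{1..i} - block_bounds (take i W) = {j \<in> {1..n}. ?R i j}"
      using i_lt by (auto simp: block_bounds_take n_def)
    also have "(\<Sum>j\<in>{j \<in> {1..n}. ?R i j}. letter_cumulant th (take j (take i W)) * bb th (drop j (take i W)))
        = (\<Sum>j\<in>{j \<in> {1..n}. ?R i j}. letter_cumulant th (take j W) * bb th (drop j (take i W)))"
      by (rule sum.cong) (auto simp: min_def)
    finally show ?thesis by (simp add: sum_distrib_right)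
  qed
  have "bb th W = th W - (\<Sum>i\<in>block_bounds W. bb th (take i W) * th (drop i W))"
    by (rule bb_recursion[OF less.prems])
  also have "(\<Sum>i\<in>block_bounds W. bb th (take i W) * th (drop i W))
      = (\<Sum>i\<in>block_bounds W. \<Sum>j\<in>{j \<in> {1..n}. ?R i j}. ?F i j)"
    by (rule sum.cong) (simp_all add: IH)
  also have "\<dots> = (\<Sum>j\<in>{1..n}. \<Sum>i\<in>{i \<in> block_bounds W. ?R i j}. ?F i j)"
    by (rule sum.swap_restrict) auto
  also have "th W = (\<Sum>j\<in>{1..n}. letter_cumulant th (take j W) * th (drop j W))"
    unfolding n_def by (rule moment_letter_cumulant_expansion[where th=th, OF assms(1) less.prems])
  finally have "bb th W = (\<Sum>j\<in>{1..n}. letter_cumulant th (take j W) * (th (drop j W)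
      - (\<Sum>i\<in>{i \<in> block_bounds W. ?R i j}. bb th (drop j (take i W)) * th (drop i W))))"
    by (simp add: sum_subtractf right_diff_distrib sum_distrib_left mult.assoc)
  also have "\<dots> = (\<Sum>j\<in>{1..n}. if j \<in> block_bounds W then 0 else letter_cumulant th (take j W) * bb th (drop j W))"
    by (rule sum.cong) (simp_all add: moment_drop_block_bounds[where th=th, OF assms(1)] n_def)
  finally show ?case
    by (simp add: sum.If_cases Diff_eq n_def)
qed

lemma bdelta_mult_bb_let:
  assumes mixed: "\<And>V. V \<noteq> [] \<Longrightarrow> hd V \<noteq> last V \<Longrightarrow> letter_cumulant th V = 0"
    and W: "W \<noteq> []" "hd W = a" "last W = a" and j: "j \<in> {1..length W}"
  shows "bdelta a th (take j W) * bb_let a th (drop j W)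
    = (if j \<in> block_bounds W then 0 else letter_cumulant th (take j W) * bb th (drop j W))"
proof (cases "j < length W")
  case True
  have take: "take j W \<noteq> []" "hd (take j W) = a" "last (take j W) = W ! (j - 1)"
    using j W by (auto simp: hd_take last_conv_nth min_def)
  have drop: "drop j W \<noteq> []" "hd (drop j W) = W ! j" "last (drop j W) = a"
    using True W by (auto simp: hd_drop_conv_nth)
  have bound: "j \<in> block_bounds W \<longleftrightarrow> W ! (j - 1) \<noteq> W ! j"
    using True j by (auto simp: block_bounds_def)
  show ?thesis
  proof (cases "W ! (j - 1) = a")
    case False
    then have "letter_cumulant th (take j W) = 0" using mixed take by auto
    then show ?thesis using take False by (simp add: bdelta_eq_letter_cumulant)
  qed (use take drop bound in \<open>auto simp: bdelta_eq_letter_cumulant bb_let_def\<close>)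
next
  case False
  then have "j = length W" using j by simp
  then show ?thesis using W by (simp add: block_bounds_def bdelta_eq_letter_cumulant bb_let_def bb_def)
qed

lemma bb_let_expansion_left:
  assumes "th [] = 1" and mixed: "\<And>V. V \<noteq> [] \<Longrightarrow> hd V \<noteq> last V \<Longrightarrow> letter_cumulant th V = 0"
  shows "bb_let a th W = eps W + (\<Sum>j\<in>{1..length W}. bdelta a th (take j W) * bb_let a th (drop j W))"
proof (cases "W \<noteq> [] \<and> hd W = a \<and> last W = a")
  case True
  then have "(\<Sum>j\<in>{1..length W}. bdelta a th (take j W) * bb_let a th (drop j W))
      = (\<Sum>j\<in>{1..length W}. if j \<in> block_bounds W then 0 else letter_cumulant th (take j W) * bb th (drop j W))"
    by (intro sum.cong) (simp_all add: bdelta_mult_bb_let[OF mixed])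
  also have "\<dots> = bb th W"
    using bb_letter_cumulant_expansion[where th=th, OF assms(1)] True by (simp add: sum.If_cases Diff_eq)
  finally show ?thesis using True by (simp add: bb_let_def eps_def)
next
  case False
  have zero: "bdelta a th (take j W) * bb_let a th (drop j W) = 0" if "j \<in> {1..length W}" for j
  proof (cases "j < length W")
    case True
    then show ?thesis using False that
      by (auto simp: bdelta_eq_letter_cumulant bb_let_def hd_take last_drop)
  qed (use False that in \<open>auto simp: bdelta_eq_letter_cumulant\<close>)
  then have "(\<Sum>j\<in>{1..length W}. bdelta a th (take j W) * bb_let a th (drop j W)) = 0"
    by (intro sum.neutral) blast
  then show ?thesis using False by (auto simp: bb_let_def eps_def)
qed

lemma boolean_recursion_reverse:
  fixes F D :: "word \<Rightarrow> complex"
  assumes rec: "\<And>W. F W = eps W + (\<Sum>j\<in>{1..length W}. D (take j W) * F (drop j W))"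
  shows "F W = eps W + (\<Sum>i<length W. F (take i W) * D (drop i W))"
proof (induction "length W" arbitrary: W rule: less_induct)
  case less
  have F0: "F [] = 1" using rec[of "[]"] by (simp add: eps_def)
  show ?case
  proof (cases "W = []")
    case True then show ?thesis using F0 by (simp add: eps_def)
  next
    case False
    define n where "n = length W"
    have n: "1 \<le> n" using False by (cases W) (auto simp: n_def)
    let ?G = "\<lambda>j k. D (take j W) * F (take (k - j) (drop j W)) * D (drop k W)"
    have "F W = D W + (\<Sum>j\<in>{1..<n}. D (take j W) * F (drop j W))"
      using rec[of W] F0 unfolding sum_atLeastAtMost_length[OF False] by (simp add: False n_def eps_def)
    also have "(\<Sum>j\<in>{1..<n}. D (take j W) * F (drop j W)) = (\<Sum>j\<in>{1..<n}. \<Sum>k\<in>{k\<in>{1..<n}. j \<le> k}. ?G j k)"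
    proof (rule sum.cong[OF refl])
      fix j assume j: "j \<in> {1..<n}"
      then have "F (drop j W) = (\<Sum>i<n - j. F (take i (drop j W)) * D (drop i (drop j W)))"
        using less.hyps[of "drop j W"] False by (simp add: n_def eps_def)
      also have "\<dots> = (\<Sum>k\<in>{k\<in>{1..<n}. j \<le> k}. F (take (k - j) (drop j W)) * D (drop k W))"
        by (rule sum.reindex_bij_witness[of _ "\<lambda>k. k - j" "\<lambda>i. i + j"]) (use j in auto)
      finally show "D (take j W) * F (drop j W) = (\<Sum>k\<in>{k\<in>{1..<n}. j \<le> k}. ?G j k)"
        by (simp add: sum_distrib_left mult.assoc)
    qed
    also have "\<dots> = (\<Sum>k\<in>{1..<n}. \<Sum>j\<in>{j\<in>{1..<n}. j \<le> k}. ?G j k)"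
      by (rule sum.swap_restrict) auto
    also have "\<dots> = (\<Sum>k\<in>{1..<n}. F (take k W) * D (drop k W))"
    proof (rule sum.cong[OF refl])
      fix k assume k: "k \<in> {1..<n}"
      then have "F (take k W) = (\<Sum>j\<in>{1..k}. D (take j (take k W)) * F (drop j (take k W)))"
        using rec[of "take k W"] by (auto simp: eps_def n_def min_def)
      also have "\<dots> = (\<Sum>j\<in>{j\<in>{1..<n}. j \<le> k}. D (take j W) * F (take (k - j) (drop j W)))"
        by (rule sum.cong) (use k in \<open>auto simp: drop_take min_def\<close>)
      finally show "(\<Sum>j\<in>{j\<in>{1..<n}. j \<le> k}. ?G j k) = F (take k W) * D (drop k W)"
        by (simp add: sum_distrib_right)
    qed
    finally have "F W = D W + (\<Sum>k\<in>{1..<n}. F (take k W) * D (drop k W))" .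
    moreover have "{..<n} = insert 0 {1..<n}" using n by auto
    ultimately show ?thesis using False F0 by (simp add: n_def[symmetric] eps_def)
  qed
qed

lemma bb_let_expansion_right:
  assumes "th [] = 1" and "\<And>V. V \<noteq> [] \<Longrightarrow> hd V \<noteq> last V \<Longrightarrow> letter_cumulant th V = 0"
  shows "bb_let a th W = eps W + (\<Sum>i<length W. bb_let a th (take i W) * bdelta a th (drop i W))"
  by (rule boolean_recursion_reverse) (rule bb_let_expansion_left[where th=th, OF assms])

lemma sum_list_indices_filter:
  fixes G :: "word \<Rightarrow> word \<Rightarrow> complex"
  shows "(\<Sum>(u, v)\<leftarrow>[(f i, g i). i \<leftarrow> [0..<n], P i]. G u v) = (\<Sum>i<n. if P i then G (f i) (g i) else 0)"
  by (induction n) (auto simp: split_beta)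

lemma tens2_delta_left:
  "tens2 (bdelta a th) g (delta_left a W) = (\<Sum>j\<in>{1..length W}. bdelta a th (take j W) * g (drop j W))"
proof -
  have "tens2 (bdelta a th) g (delta_left a W)
      = (\<Sum>i<length W. if W ! i = a then bdelta a th (take (Suc i) W) * g (drop (Suc i) W) else 0)"
    by (simp add: tens2_def delta_left_def sum_list_indices_filter)
  also have "\<dots> = (\<Sum>i<length W. bdelta a th (take (Suc i) W) * g (drop (Suc i) W))"
    by (rule sum.cong) (auto simp: bdelta_eq_letter_cumulant take_Suc_conv_app_nth)
  also have "\<dots> = (\<Sum>j\<in>{1..length W}. bdelta a th (take j W) * g (drop j W))"
    by (rule sum.reindex_bij_witness[of _ "\<lambda>j. j - 1" Suc]) auto
  finally show ?thesis .
qed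

lemma tens2_delta_right:
  "tens2 g (bdelta a th) (delta_right a W) = (\<Sum>i<length W. g (take i W) * bdelta a th (drop i W))"
proof -
  have "tens2 g (bdelta a th) (delta_right a W)
      = (\<Sum>i<length W. if W ! i = a then g (take i W) * bdelta a th (drop i W) else 0)"
    by (simp add: tens2_def delta_right_def sum_list_indices_filter)
  also have "\<dots> = (\<Sum>i<length W. g (take i W) * bdelta a th (drop i W))"
    by (rule sum.cong) (auto simp: bdelta_eq_letter_cumulant hd_drop_conv_nth)
  finally show ?thesis .
qed

lemma bb_let_delta_left:
  assumes "adapted ph ps"
  shows "bb_let a ph W = eps W + tens2 (bdelta a ph) (bb_let a ph) (delta_left a W)"
  unfolding tens2_delta_left
  by (rule bb_let_expansion_left) (use adapted_unital[OF assms] letter_cumulant_mixed[OF assms] in auto)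

lemma bb_let_delta_right:
  assumes "adapted ph ps"
  shows "bb_let a ph W = eps W + tens2 (bb_let a ph) (bdelta a ph) (delta_right a W)"
  unfolding tens2_delta_right
  by (rule bb_let_expansion_right) (use adapted_unital[OF assms] letter_cumulant_mixed[OF assms] in auto)

section \<open>The letter-wise cumulants of \<open>\<phi>\<close> through the block cumulants of \<open>\<psi>\<close>\<close>

text \<open>A state \<open>T @ X\<^sup>m\<close> (\<open>m > 0\<close>, \<open>T\<close> not ending in \<open>X\<close>) is split into its prefix \<open>T\<close> and the length
  \<open>m\<close> of its final \<open>X\<close>-block. Under left multiplication the prefix evolves in the model of
  \<open>(\<psi>, \<psi>)\<close>, except that from the empty prefix the letter \<open>X\<close> is absorbed into the final block;
  \<open>prefix_mult\<close> is this prefix dynamics and \<open>x_shift\<close> the effect of the absorption.\<close>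

definition x_tail :: "(word \<Rightarrow> complex) \<Rightarrow> (nat \<Rightarrow> complex) \<Rightarrow> word \<Rightarrow> complex" where
  "x_tail u v V = (if V \<noteq> [] \<and> last V = X
     then u (concat (butlast (blocks V))) * v (length (last (blocks V))) else 0)"

definition prefix_mult :: "(word \<Rightarrow> complex) \<Rightarrow> transitions" where
  "prefix_mult ps a T = (if T = [] \<and> a = X then [] else left_mult ps ps a T)"

definition x_shift :: "(word \<Rightarrow> complex) \<Rightarrow> (nat \<Rightarrow> complex) \<Rightarrow> nat \<Rightarrow> complex" where
  "x_shift ph v m = v (Suc m) - ph (replicate m X) * v 1"

lemma x_tail_append:
  assumes "T = [] \<or> last T \<noteq> X" "0 < m"
  shows "x_tail u v (T @ replicate m X) = u T * v m"
proof -
  have "blocks (T @ replicate m X) = blocks T @ [replicate m X]"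
    by (rule blocks_append_const[OF assms(1)]) (use assms(2) in auto)
  then show ?thesis using assms(2) by (simp add: x_tail_def)
qed

lemma left_mult_append_block:
  assumes "T \<noteq> []" "last T \<noteq> x" "M \<noteq> []" "set M \<subseteq> {x}"
  shows "left_mult ph ps a (T @ M) = map (\<lambda>(T', c). (T' @ M, c)) (left_mult ps ps a T)"
proof -
  have "blocks (T @ M) = blocks T @ [M]" using blocks_append_const[of T x M] assms by auto
  moreover obtain U bs where "blocks T = U # bs" using assms(1) by (cases "blocks T") auto
  moreover from this have "T = U @ concat bs" using blocks_eq_Cons by blast
  ultimately show ?thesis by (cases "bs = []") (simp_all add: left_mult_def)
qed

lemma transfer_append_block:
  fixes g :: "word \<Rightarrow> complex"
  shows "(\<Sum>(V', c)\<leftarrow>map (\<lambda>(T', c). (T' @ M, c)) L. c * g V') = (\<Sum>(T', c)\<leftarrow>L. c * g (T' @ M))"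
  by (induction L) auto

lemma transfer_off_vacuum_x_tail_prefix:
  assumes "T \<noteq> []" "last T \<noteq> X" "0 < m"
  shows "transfer (off_vacuum (left_mult ph ps)) a (x_tail u v) (T @ replicate m X)
    = transfer (left_mult ps ps) a u T * v m"
proof -
  let ?M = "replicate m X"
  have M: "?M \<noteq> []" "set ?M \<subseteq> {X}" using assms(3) by auto
  have keep: "filter (\<lambda>(V', c). V' \<noteq> []) (map (\<lambda>(T', c). (T' @ ?M, c)) L) = map (\<lambda>(T', c). (T' @ ?M, c)) L"
    for L :: "(word \<times> complex) list"
    using M(1) by (induction L) auto
  have "transfer (off_vacuum (left_mult ph ps)) a (x_tail u v) (T @ ?M)
      = (\<Sum>(T', c)\<leftarrow>left_mult ps ps a T. c * x_tail u v (T' @ ?M))"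
    unfolding transfer_def off_vacuum_def left_mult_append_block[OF assms(1,2) M] keep transfer_append_block ..
  also have "\<dots> = (\<Sum>(T', c)\<leftarrow>left_mult ps ps a T. c * (u T' * v m))"
  proof (rule sum_list_weighted_cong)
    fix T' c assume "(T', c) \<in> set (left_mult ps ps a T)"
    then have "T' = [] \<or> last T' \<noteq> X" using left_mult_last[OF assms(1)] assms(2) by fastforce
    then show "x_tail u v (T' @ ?M) = u T' * v m" by (rule x_tail_append[OF _ assms(3)])
  qed
  also have "\<dots> = transfer (left_mult ps ps) a u T * v m"
    unfolding transfer_def by (rule sum_list_weighted_mult_right)
  finally show ?thesis .
qed

lemma transfer_off_vacuum_x_tail:
  "transfer (off_vacuum (left_mult ph ps)) a (x_tail u v) V
   = x_tail (transfer (prefix_mult ps) a u) v V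
     + (if a = X then u [] else 0) * (x_tail eps (x_shift ph v) V + v 1 * eps V)"
proof (cases "V \<noteq> [] \<and> last V = X")
  case notX: False
  show ?thesis
  proof (cases "V = []")
    case True
    have "blocks [X] = [[X]]" by simp
    then show ?thesis using True
      by (cases a) (simp_all add: transfer_def off_vacuum_def left_mult_def x_tail_def eps_def)
  next
    case ne: False
    have "transfer (off_vacuum (left_mult ph ps)) a (x_tail u v) V = 0"
      unfolding transfer_def off_vacuum_def
      by (rule sum_list_weighted_vanish) (use ne left_mult_last[OF ne] notX in \<open>auto simp: x_tail_def\<close>)
    then show ?thesis using ne notX by (simp add: x_tail_def eps_def)
  qed
next
  case True
  then obtain T m where V: "V = T @ replicate m X" and T: "T = [] \<or> last T \<noteq> X" and m: "0 < m"
    using split_last_block by blast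
  let ?M = "replicate m X"
  have tail: "x_tail w z V = w T * z m" for w z using x_tail_append[OF T m] V by simp
  show ?thesis
  proof (cases "T = []")
    case Tnil: True
    have "blocks ?M = [?M]" "hd ?M = X" using blocks_append_const[of "[]" X ?M] m by simp_all
    moreover have "x_tail u v (X # ?M) = u [] * v (Suc m)" "x_tail u v (Y # ?M) = u [Y] * v m"
      "x_tail u v [X] = u [] * v 1"
      using x_tail_append[of "[]" "Suc m" u v] x_tail_append[of "[Y]" m u v] x_tail_append[of "[]" 1 u v] m
      by simp_all
    moreover have "x_tail w z ?M = w [] * z m" for w z using x_tail_append[of "[]" m w z] m by simp
    ultimately show ?thesis using Tnil V m
      by (cases a) (simp_all add: transfer_def off_vacuum_def left_mult_def tail x_shift_def prefix_mult_def
          eps_def algebra_simps)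
  next
    case False
    with T have "last T \<noteq> X" by simp
    then have "transfer (off_vacuum (left_mult ph ps)) a (x_tail u v) V = transfer (left_mult ps ps) a u T * v m"
      using transfer_off_vacuum_x_tail_prefix[OF False _ m] V by simp
    with False True show ?thesis by (simp add: tail transfer_def prefix_mult_def eps_def)
  qed
qed

lemma partial_Suc_Cons:
  "partial a (Suc k) (b # W) = (if b = a then map (Cons []) (partial a k W) else [])
      @ map (\<lambda>r. (b # hd r) # tl r) (partial a (Suc k) W)"
proof -
  have "[0..<Suc (length W)] = 0 # map Suc [0..<length W]"
    by (subst upt_conv_Cons) (simp_all add: map_Suc_upt)
  then show ?thesis
    by (simp only: partial.simps(2)[of a k "b # W"] length_Cons list.map)
      (simp add: map_concat comp_def if_distrib[of "map _"] cong: if_cong)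
qed

lemma length_partial: "r \<in> set (partial a k W) \<Longrightarrow> length r = Suc k"
  by (induction k arbitrary: W r) auto

lemma partial_eq_Nil: "length W < k \<Longrightarrow> partial a k W = []"
proof (induction k arbitrary: W)
  case (Suc k)
  then have "partial a k (drop (Suc i) W) = []" if "i < length W" for i
    using that by simp
  then show ?case by (auto simp: partial.simps(2))
qed simp

declare partial.simps(2) [simp del]

lemma partial_Suc_Nil [simp]: "partial a (Suc k) [] = []"
  by (simp add: partial.simps(2))

lemma tens_Nil [simp]: "tens fs [] = 0"
  by (simp add: tens_def)

lemma tens_singleton: "tens [f] [[W]] = f W"
  by (simp add: tens_def)

lemma tens_append: "tens fs (L1 @ L2) = tens fs L1 + tens fs L2"
  by (simp add: tens_def)

lemma tens_Cons_Nil: "tens (f # fs) (map (Cons []) L) = f [] * tens fs L"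
  by (induction L) (auto simp: tens_def algebra_simps)

lemma tens_Cons_Cons:
  "(\<And>r. r \<in> set L \<Longrightarrow> r \<noteq> []) \<Longrightarrow>
   tens (f # fs) (map (\<lambda>r. (b # hd r) # tl r) L) = tens ((\<lambda>w. f (b # w)) # fs) L"
proof (induction L)
  case (Cons r L)
  then obtain r0 rs where "r = r0 # rs" by (cases r) auto
  with Cons show ?case by (simp add: tens_def)
qed (simp add: tens_def)

lemma tens_zero_Cons:
  "(\<And>r. r \<in> set L \<Longrightarrow> r \<noteq> []) \<Longrightarrow> tens ((\<lambda>w. 0) # fs) L = 0"
proof (induction L)
  case (Cons r L)
  then obtain r0 rs where "r = r0 # rs" by (cases r) auto
  with Cons show ?case by (simp add: tens_def)
qed simp

lemma tens_partial_Suc_Cons: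
  "tens (f # fs) (partial a (Suc k) (b # W))
    = (if b = a then f [] * tens fs (partial a k W) else 0) + tens ((\<lambda>w. f (b # w)) # fs) (partial a (Suc k) W)"
proof -
  have "\<And>r. r \<in> set (partial a (Suc k) W) \<Longrightarrow> r \<noteq> []"
    using length_partial by fastforce
  then show ?thesis
    by (simp add: partial_Suc_Cons tens_append tens_Cons_Nil tens_Cons_Cons)
qed

lemma tens_partial_replicate:
  assumes "\<And>f w. f \<in> set fs \<Longrightarrow> w \<noteq> [] \<Longrightarrow> last w = a \<Longrightarrow> f w = 0" and "length fs = Suc j"
  shows "tens fs (partial a j (replicate n a)) = (if j = n then (\<Prod>f\<leftarrow>fs. f []) else 0)"
  using assms
proof (induction n arbitrary: j fs)
  case 0
  then show ?case
    by (cases j) (auto simp: tens_singleton length_Suc_conv partial.simps(2))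
next
  case (Suc n)
  show ?case
  proof (cases j)
    case 0
    with Suc.prems obtain f where fs: "fs = [f]" by (auto simp: length_Suc_conv)
    then show ?thesis
      using 0 Suc.prems(1)[of f "replicate (Suc n) a"] by (simp add: tens_singleton)
  next
    case (Suc j')
    with Suc.prems obtain f fs' where fs: "fs = f # fs'" "length fs' = Suc j'"
      by (auto simp: length_Suc_conv)
    have "tens fs' (partial a j' (replicate n a)) = (if j' = n then (\<Prod>f\<leftarrow>fs'. f []) else 0)"
      by (rule Suc.IH) (use Suc.prems fs in auto)
    moreover have "tens ((\<lambda>w. f (a # w)) # fs') (partial a (Suc j') (replicate n a))
        = (if Suc j' = n then f [a] * (\<Prod>f\<leftarrow>fs'. f []) else 0)"
      by (subst Suc.IH) (use Suc.prems fs in auto)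
    moreover have "f [a] = 0" using Suc.prems(1)[of f "[a]"] fs by simp
    ultimately show ?thesis
      using Suc fs by (simp add: tens_partial_Suc_Cons)
  qed
qed

definition tail_walk ::
  "(word \<Rightarrow> complex) \<Rightarrow> (word \<Rightarrow> complex) \<Rightarrow> (word \<Rightarrow> complex) \<Rightarrow> (nat \<Rightarrow> complex) \<Rightarrow> word \<Rightarrow> complex" where
  "tail_walk ph ps u v P = walk (off_vacuum (left_mult ph ps)) P (x_tail u v) []"

definition tail_expansion ::
  "(word \<Rightarrow> complex) \<Rightarrow> (word \<Rightarrow> complex) \<Rightarrow> (word \<Rightarrow> complex) \<Rightarrow> (nat \<Rightarrow> complex) \<Rightarrow> word \<Rightarrow> complex" where
  "tail_expansion ph ps u v P = (\<Sum>k\<le>length P. (x_shift ph ^^ k) v 1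
     * tens ((\<lambda>w. walk (prefix_mult ps) w u []) # replicate k (amplitude (prefix_mult ps)) @ [eps])
         (partial X (Suc k) P))"

lemma tail_expansion_upto:
  assumes "length P \<le> N"
  shows "tail_expansion ph ps u v P = (\<Sum>k\<le>N. (x_shift ph ^^ k) v 1
     * tens ((\<lambda>w. walk (prefix_mult ps) w u []) # replicate k (amplitude (prefix_mult ps)) @ [eps])
         (partial X (Suc k) P))"
  unfolding tail_expansion_def
  by (rule sum.mono_neutral_left) (use assms in \<open>auto simp: partial_eq_Nil\<close>)

lemma tail_walk_Cons:
  "tail_walk ph ps u v (a # P) = tail_walk ph ps (transfer (prefix_mult ps) a u) v P
     + (if a = X then u [] else 0) * (tail_walk ph ps eps (x_shift ph v) P + v 1 * eps P)"
proof -
  have "transfer (off_vacuum (left_mult ph ps)) a (x_tail u v)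
      = (\<lambda>V. x_tail (transfer (prefix_mult ps) a u) v V
          + (if a = X then u [] else 0) * (\<lambda>V. x_tail eps (x_shift ph v) V + v 1 * eps V) V)"
    by (rule ext) (simp add: transfer_off_vacuum_x_tail)
  then show ?thesis
    by (simp add: tail_walk_def walk_add_scaled walk_off_vacuum_eps)
qed

lemma tail_walk_eq_expansion: "tail_walk ph ps u v P = tail_expansion ph ps u v P"
proof (induction P arbitrary: u v)
  case Nil
  then show ?case by (simp add: tail_walk_def tail_expansion_def x_tail_def)
next
  case (Cons b P)
  let ?f = "\<lambda>u w. walk (prefix_mult ps) w u []" and ?fs = "\<lambda>k. replicate k (amplitude (prefix_mult ps)) @ [eps]"
  have split: "tens (?f u # ?fs k) (partial X (Suc k) (b # P))
      = (if b = X then u [] * tens (?fs k) (partial X k P) else 0)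
        + tens (?f (transfer (prefix_mult ps) b u) # ?fs k) (partial X (Suc k) P)" for k
    by (simp add: tens_partial_Suc_Cons)
  have "tail_expansion ph ps u v (b # P)
      = (\<Sum>k\<le>Suc (length P). (x_shift ph ^^ k) v 1 * (if b = X then u [] * tens (?fs k) (partial X k P) else 0))
        + tail_expansion ph ps (transfer (prefix_mult ps) b u) v P"
    by (simp add: tail_expansion_def split sum.distrib distrib_left tail_expansion_upto[of P "Suc (length P)"]
        partial_eq_Nil)
  also have "(\<Sum>k\<le>Suc (length P). (x_shift ph ^^ k) v 1 * (if b = X then u [] * tens (?fs k) (partial X k P) else 0))
      = (if b = X then u [] else 0) * (tail_expansion ph ps eps (x_shift ph v) P + v 1 * eps P)"
    by (simp only: sum.atMost_Suc_shift)
      (simp add: tens_singleton tail_expansion_def walk_eps_Nil_eq_amplitude sum_distrib_left funpow_Suc_right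
        algebra_simps del: funpow.simps)
  finally show ?case using Cons.IH by (simp add: tail_walk_Cons algebra_simps)
qed

text \<open>In the basis \<open>e\<^sub>V\<close>, \<open>X \<cdot> 1 = e\<^bsub>[X]\<^esub> + \<phi>(X)\<close>, and the vacuum coordinate of
  \<open>X \<cdot> e\<^bsub>X^m\<^esub>\<close> is \<open>\<phi>(X^(m+1)) - \<phi>(X^m) \<phi>(X)\<close>; no other basis vector is sent to the
  vacuum by \<open>X\<close>.\<close>

lemma transfer_left_mult_X_eps:
  "transfer (left_mult ph ps) X eps V = x_tail eps (x_shift ph (\<lambda>m. ph (replicate m X))) V + ph [X] * eps V"
proof (cases "V \<noteq> [] \<and> last V = X")
  case True
  then obtain T m where V: "V = T @ replicate m X" and T: "T = [] \<or> last T \<noteq> X" and m: "0 < m"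
    using split_last_block by blast
  let ?M = "replicate m X"
  have M: "?M \<noteq> []" "set ?M \<subseteq> {X}" "hd ?M = X" using m by auto
  show ?thesis
  proof (cases "T = []")
    case True
    have "blocks ?M = [?M]" using blocks_append_const[of "[]" X ?M] M by simp
    moreover have "x_tail w z ?M = w [] * z m" for w z using x_tail_append[of "[]" m w z] m by simp
    moreover have "X # ?M = replicate (Suc m) X" "replicate (Suc 0) X = [X]" by simp_all
    ultimately show ?thesis using True V M m
      by (simp add: transfer_def left_mult_def x_shift_def eps_def del: replicate_Suc)
  next
    case False
    with T have lT: "last T \<noteq> X" by simp
    have "transfer (left_mult ph ps) X eps V = 0"
      unfolding V transfer_def left_mult_append_block[OF False lT M(1,2)] transfer_append_block
      by (rule sum_list_weighted_vanish) (use M in \<open>simp add: eps_def\<close>)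
    then show ?thesis using False V x_tail_append[OF T m] by (simp add: eps_def)
  qed
next
  case False
  show ?thesis
  proof (cases "V = []")
    case ne: False
    have "transfer (left_mult ph ps) X eps V = 0"
      unfolding transfer_def
    proof (rule sum_list_weighted_vanish)
      fix V' c assume "(V', c) \<in> set (left_mult ph ps X V)"
      then have "V' \<noteq> []" using left_mult_to_vacuum[OF ne] False ne by auto
      then show "eps V' = 0" by (simp add: eps_def)
    qed
    then show ?thesis using ne False by (simp add: x_tail_def eps_def)
  qed (simp add: transfer_def left_mult_def x_tail_def eps_def)
qed

lemma excursion_X_Cons:
  "excursion (left_mult ph ps) (X # P)
     = tail_walk ph ps eps (x_shift ph (\<lambda>m. ph (replicate m X))) P + ph [X] * eps P"
proof -
  have "excursion (left_mult ph ps) (X # P) = walk (off_vacuum (left_mult ph ps)) P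
      (\<lambda>V. x_tail eps (x_shift ph (\<lambda>m. ph (replicate m X))) V + ph [X] * eps V) []"
    by (simp add: excursion_def transfer_left_mult_X_eps[abs_def])
  then show ?thesis
    by (simp add: walk_add_scaled tail_walk_def walk_off_vacuum_eps)
qed

lemma amplitude_prefix_mult_last_X:
  assumes "w \<noteq> []" "last w = X"
  shows "amplitude (prefix_mult ps) w = 0"
proof -
  obtain w' where "w = w' @ [X]" using assms by (metis append_butlast_last_id)
  then show ?thesis by (simp add: amplitude_def walk_append_letter transfer_def prefix_mult_def)
qed

lemma letter_cumulant_X_power:
  assumes "adapted ph ps"
  shows "letter_cumulant ph (replicate (Suc k) X) = (x_shift ph ^^ k) (\<lambda>m. ph (replicate m X)) 1"
proof (cases k)
  case 0
  then show ?thesis by (simp add: letter_cumulant_singleton)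
next
  case (Suc j)
  let ?v = "x_shift ph (\<lambda>m. ph (replicate m X))" and ?P = "replicate (Suc j) X"
  have "letter_cumulant ph (X # ?P) = excursion (left_mult ph ps) (X # ?P)"
    by (rule letter_cumulant_eq_excursion_left_mult[OF assms]) simp
  also have "\<dots> = tail_expansion ph ps eps ?v ?P"
    by (simp add: excursion_X_Cons tail_walk_eq_expansion eps_def)
  also have "\<dots> = (\<Sum>i\<le>Suc j. if i = j then (x_shift ph ^^ i) ?v 1 else 0)"
    unfolding tail_expansion_def length_replicate walk_eps_Nil_eq_amplitude
  proof (rule sum.cong[OF refl])
    fix i
    have "tens (amplitude (prefix_mult ps) # replicate i (amplitude (prefix_mult ps)) @ [eps]) (partial X (Suc i) ?P)
        = (if i = j then 1 else 0)"
      by (subst tens_partial_replicate) (auto simp: amplitude_prefix_mult_last_X eps_def)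
    then show "(x_shift ph ^^ i) ?v 1
        * tens (amplitude (prefix_mult ps) # replicate i (amplitude (prefix_mult ps)) @ [eps]) (partial X (Suc i) ?P)
        = (if i = j then (x_shift ph ^^ i) ?v 1 else 0)"
      by simp
  qed
  finally show ?thesis
    using Suc by (simp add: funpow_Suc_right del: funpow.simps)
qed

lemma letter_cumulant_X_Cons:
  assumes "adapted ph ps"
  shows "letter_cumulant ph (X # P) = ph [X] * eps P
     + (\<Sum>k\<le>length P. letter_cumulant ph (replicate (Suc (Suc k)) X)
          * tens (amplitude (prefix_mult ps) # replicate k (amplitude (prefix_mult ps)) @ [eps]) (partial X (Suc k) P))"
proof -
  have "letter_cumulant ph (X # P) = excursion (left_mult ph ps) (X # P)"
    by (rule letter_cumulant_eq_excursion_left_mult[OF assms]) simp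
  then show ?thesis
    by (simp add: excursion_X_Cons tail_walk_eq_expansion tail_expansion_def walk_eps_Nil_eq_amplitude
        letter_cumulant_X_power[OF assms] funpow_Suc_right del: funpow.simps replicate_Suc)
qed

lemma walk_off_vacuum_cong:
  assumes "\<And>a V. V \<noteq> [] \<Longrightarrow> tr1 a V = tr2 a V" "\<And>V. V \<noteq> [] \<Longrightarrow> g1 V = g2 V" "V\<^sub>0 \<noteq> []"
  shows "walk (off_vacuum tr1) P g1 V\<^sub>0 = walk (off_vacuum tr2) P g2 V\<^sub>0"
  using assms(2,3)
proof (induction P arbitrary: g1 g2)
  case (Cons a P)
  have "transfer (off_vacuum tr1) a g1 V = transfer (off_vacuum tr2) a g2 V" if "V \<noteq> []" for V
    unfolding transfer_def off_vacuum_def assms(1)[OF that]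
    by (rule sum_list_weighted_cong) (use Cons.prems in auto)
  then show ?case using Cons by simp
qed simp

lemma excursion_prefix_mult:
  assumes "P \<noteq> []"
  shows "excursion (prefix_mult ps) P = (if last P = Y then excursion (left_mult ps ps) P else 0)"
proof -
  obtain a P' where P: "P = a # P'" using assms by (cases P) auto
  show ?thesis
  proof (cases P' rule: rev_cases)
    case Nil
    then show ?thesis using P by (cases a) (simp_all add: excursion_def transfer_def prefix_mult_def)
  next
    case (snoc P'' b)
    show ?thesis
    proof (cases b)
      case X
      have "off_vacuum (prefix_mult ps) X [] = []" by (simp add: off_vacuum_def prefix_mult_def)
      then show ?thesis using P snoc X by (simp add: excursion_def walk_append_letter transfer_def)
    next
      case Y
      have "off_vacuum (prefix_mult ps) Y [] = [([Y], 1)]" "off_vacuum (left_mult ps ps) Y [] = [([Y], 1)]"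
        by (simp_all add: off_vacuum_def prefix_mult_def left_mult_def)
      moreover have "walk (off_vacuum (prefix_mult ps)) P'' (transfer (prefix_mult ps) a eps) [Y]
          = walk (off_vacuum (left_mult ps ps)) P'' (transfer (left_mult ps ps) a eps) [Y]"
        by (rule walk_off_vacuum_cong) (auto simp: prefix_mult_def transfer_def)
      ultimately show ?thesis using P snoc Y by (simp add: excursion_def walk_append_letter transfer_def)
    qed
  qed
qed

lemma amplitude_prefix_mult:
  assumes "adapted ps ps"
  shows "amplitude (prefix_mult ps) w = bb_let Y ps w"
proof (induction "length w" arbitrary: w rule: less_induct)
  case less
  show ?case
  proof (cases "w = []")
    case False
    have mixed: "\<And>V. V \<noteq> [] \<Longrightarrow> hd V \<noteq> last V \<Longrightarrow> letter_cumulant ps V = 0"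
      using letter_cumulant_mixed[OF assms] by blast
    have "amplitude (prefix_mult ps) w
        = (\<Sum>j\<in>{1..length w}. excursion (prefix_mult ps) (take j w) * amplitude (prefix_mult ps) (drop j w))"
      by (rule amplitude_excursion_decomp[OF False])
    also have "\<dots> = (\<Sum>j\<in>{1..length w}. bdelta Y ps (take j w) * bb_let Y ps (drop j w))"
    proof (rule sum.cong[OF refl])
      fix j assume j: "j \<in> {1..length w}"
      then have "take j w \<noteq> []" using False by auto
      then have "excursion (prefix_mult ps) (take j w) = bdelta Y ps (take j w)"
        using letter_cumulant_eq_excursion_left_mult[OF assms] mixed
        by (auto simp: excursion_prefix_mult bdelta_eq_letter_cumulant)
      then show "excursion (prefix_mult ps) (take j w) * amplitude (prefix_mult ps) (drop j w)
          = bdelta Y ps (take j w) * bb_let Y ps (drop j w)"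
        using less.hyps[of "drop j w"] j False by simp
    qed
    also have "\<dots> = bb_let Y ps w"
      using bb_let_expansion_left[OF adapted_unital[OF assms] mixed, of Y w] False by (simp add: eps_def)
    finally show ?thesis .
  qed (simp add: bb_let_def)
qed

lemma bdelta_X_expansion:
  assumes "adapted ph ps" "adapted ps ps"
  shows "bdelta X ph W = eps W + (\<Sum>k\<le>length W. letter_cumulant ph (replicate (Suc k) X)
      * tens ([eps] @ replicate k (bb_let Y ps) @ [eps]) (partial X (Suc k) W))"
proof (cases W)
  case Nil
  then show ?thesis by (simp add: bdelta_def eps_def)
next
  case (Cons b P)
  have ne: "\<And>k r. r \<in> set (partial X (Suc k) P) \<Longrightarrow> r \<noteq> []" using length_partial by fastforce
  have eps_Cons: "(\<lambda>w. eps (c # w)) = (\<lambda>w. 0)" for c by (simp add: eps_def fun_eq_iff)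
  have amp: "amplitude (prefix_mult ps) = bb_let Y ps"
    using amplitude_prefix_mult[OF assms(2)] by blast
  show ?thesis
  proof (cases b)
    case Y
    then show ?thesis using Cons
      by (simp add: bdelta_def eps_def tens_partial_Suc_Cons eps_Cons tens_zero_Cons[OF ne])
  next
    case X
    have "bdelta X ph W = letter_cumulant ph (X # P)"
      using letter_cumulant_mixed[OF assms(1), of "X # P"] Cons X by (auto simp: bdelta_eq_letter_cumulant)
    also have "\<dots> = eps W + (\<Sum>k\<le>Suc (length P). letter_cumulant ph (replicate (Suc k) X)
        * tens (replicate k (bb_let Y ps) @ [eps]) (partial X k P))"
    proof -
      have "replicate (Suc k) (bb_let Y ps) = bb_let Y ps # replicate k (bb_let Y ps)"
        "replicate (Suc 0) X = [X]" for k by simp_all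
      then show ?thesis
        by (simp only: sum.atMost_Suc_shift)
          (simp add: letter_cumulant_X_Cons[OF assms(1)] letter_cumulant_singleton tens_singleton amp
            Cons X eps_def del: replicate_Suc)
    qed
    also have "\<dots> = eps W + (\<Sum>k\<le>length W. letter_cumulant ph (replicate (Suc k) X)
        * tens ([eps] @ replicate k (bb_let Y ps) @ [eps]) (partial X (Suc k) W))"
      by (simp add: Cons X tens_partial_Suc_Cons eps_Cons tens_zero_Cons[OF ne] eps_def del: replicate_Suc)
    finally show ?thesis .
  qed
qed

lemma app_bdelta_X:
  assumes "adapted ph ps" "adapted ps ps" "is_poly P"
  shows "app (bdelta X ph) P = app eps P +
    (\<Sum>k. bcum ph (replicate (Suc k) (mono [X])) *
       app (\<lambda>W. tens ([eps] @ replicate k (bb_let Y ps) @ [eps]) (partial X (Suc k) W)) P)"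
proof -
  have "app (bdelta X ph) P = app eps P + (\<Sum>k. app (\<lambda>W. letter_cumulant ph (replicate (Suc k) X)
      * tens ([eps] @ replicate k (bb_let Y ps) @ [eps]) (partial X (Suc k) W)) P)"
    unfolding bdelta_X_expansion[OF assms(1,2), abs_def] app_add_fun
    by (subst app_eq_suminf[OF assms(3)]) (auto simp: partial_eq_Nil)
  then show ?thesis
    by (simp add: app_scale_fun letter_cumulant_def)
qed

theorem proposition4:
  fixes phi psi :: "word \<Rightarrow> complex" and P :: cpoly
  assumes "unital phi" and "unital psi" and "c_free phi psi" and "is_poly P"
  shows "(app (bb_let X phi) P = app eps P + app (\<lambda>W. tens2 (bdelta X phi) (bb_let X phi) (delta_left X W)) P
       \<and> app (bb_let X phi) P = app eps P + app (\<lambda>W. tens2 (bb_let X phi) (bdelta X phi) (delta_right X W)) P)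
     \<and> app (bdelta X phi) P = app eps P +
       (\<Sum>k. bcum phi (replicate (Suc k) (mono [X])) *
          app (\<lambda>W. tens ([eps] @ replicate k (bb_let Y psi) @ [eps]) (partial X (Suc k) W)) P)"
proof -
  have adapted: "adapted phi psi" "adapted psi psi"
    using adapted_if_c_free[OF assms(3,1,2)] adapted_if_free[OF _ assms(2)] assms(3)
    by (auto simp: c_free_def)
  show ?thesis
    unfolding app_add_fun[symmetric] bb_let_delta_left[OF adapted(1), symmetric]
      bb_let_delta_right[OF adapted(1), symmetric]
    using app_bdelta_X[OF adapted assms(4)] by simp
qed

end
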